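(* Let $n,m$ be positive integers and let $(\mathbf{x}_i,\mathbf{y}_i)_{i=1}^m$ be i.i.d. samples from a zero-mean jointly Gaussian distribution on $\mathbb{R}^n\times\mathbb{R}^n$ with $\mathbb{E}[\mathbf{x}\mathbf{x}^\top]=\mathbb{E}[\mathbf{y}\mathbf{y}^\top]=\mathbf{I}_n$ and $\boldsymbol{\Sigma}_{xy}=\mathbb{E}[\mathbf{x}\mathbf{y}^\top]=\rho\mathbf{u}\mathbf{v}^\top$, where $\rho\in(0,1)$, $\|\mathbf{u}\|_2=\|\mathbf{v}\|_2=1$, $\|\mathbf{u}\|_0\le k_{\mathbf{u}}$, $\|\mathbf{v}\|_0\le k_{\mathbf{v}}$. Condition on the event $\mathcal{E}$ (defined in the context). Let $k_{\max}=\max(k_{\mathbf{u}},k_{\mathbf{v}})$ and, for each $t$, let $t_{\mathbf{u}}=\min(t,k_{\mathbf{u}})$, $t_{\mathbf{v}}=\min(t,k_{\mathbf{v}})$. Let $\gamma\in(0,1)$. There is an absolute constant $C>0$ such that, with $C_1=C\frac{(1+\rho)^2}{\rho^2\gamma^2(1-\sqrt{\gamma})^2}$ and $C_2=C\frac{1+\rho}{\rho\gamma}$, if $$m\ \ge\ C_1\max_{1\le t\le k_{\max}}(t_{\mathbf{u}}+t_{\mathbf{v}})\,s_{\mathbf{u}}(t_{\mathbf{u}})\,s_{\mathbf{v}}(t_{\mathbf{v}})\log n,$$ then the outputs $\hat{\mathbf{u}}^{(k_{\max})},\hat{\mathbf{v}}^{(k_{\max})}$ of the Bi-SEP algorithm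 satisfy $$\sin\angle(\hat{\mathbf{u}}^{(k_{\max})},\mathbf{u})\le\sqrt{1-\gamma}+C_2\sqrt{\frac{(k_{\mathbf{u}}+k_{\mathbf{v}})\log n}{m}},\qquad \sin\angle(\hat{\mathbf{v}}^{(k_{\max})},\mathbf{v})\le\sqrt{1-\gamma}+C_2\sqrt{\frac{(k_{\mathbf{u}}+k_{\mathbf{v}})\log n}{m}}.$$
   Context: Sample cross-covariance: $\widehat{\boldsymbol{\Sigma}}_{xy}=\frac1m\sum_{i=1}^m\mathbf{x}_i\mathbf{y}_i^\top$; noise matrix $\mathbf{W}=\widehat{\boldsymbol{\Sigma}}_{xy}-\rho\mathbf{u}\mathbf{v}^\top$. For $S_1,S_2\subset[n]$, $\mathbf{W}_{S_1,S_2}$ is the submatrix with rows $S_1$, columns $S_2$; $\|\cdot\|_2$ is the spectral norm. The event $\mathcal{E}$ is: for all $S_1,S_2\subset[n]$ with $|S_1|\le k_{\mathbf{u}}$, $|S_2|\le k_{\mathbf{v}}$, $\|\mathbf{W}_{S_1,S_2}\|_2\le C\sqrt{((|S_1|+|S_2|)\log n+c'\log n)/m}$, for fixed absolute constants $C,c'>0$. Structure functions: with $u_{(i)}$ the $i$-th largest entry of $\mathbf{u}$ in absolute value, $s_{\mathbf{u}}(p)=(\sum_{i=1}^p u_{(i)}^2)^{-1}$ and similarly $s_{\mathbf{v}}(q)=(\sum_{j=1}^q v_{(j)}^2)^{-1}$, for $p,q\in[n]$. $\sin\angle(\mathbf{a},\mathbf{b})=\sqrt{1-\langle\mathbf{a},\mathbf{b}\rangle^2}$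 for unit vectors. Bi-SEP algorithm (input $\widehat{\boldsymbol{\Sigma}}_{xy},k_{\mathbf{u}},k_{\mathbf{v}}$): pick $(i_0,j_0)=\arg\max_{i,j}|(\widehat{\boldsymbol{\Sigma}}_{xy})_{ij}|$, set $S_{\mathbf{u}}^{(0)}=\{i_0\}$, $S_{\mathbf{v}}^{(0)}=\{j_0\}$. For $t=0,\dots,k_{\max}-1$: let $(\hat{\mathbf{u}}^{(t)},\hat{\mathbf{v}}^{(t)})$ be the unit-norm leading left/right singular vectors of the submatrix $(\widehat{\boldsymbol{\Sigma}}_{xy})_{S_{\mathbf{u}}^{(t)},S_{\mathbf{v}}^{(t)}}$, zero-padded to $\mathbb{R}^n$; set $\mathbf{r}_{\mathbf{u}}=\widehat{\boldsymbol{\Sigma}}_{xy}\hat{\mathbf{v}}^{(t)}$, $\mathbf{r}_{\mathbf{v}}=\widehat{\boldsymbol{\Sigma}}_{xy}^\top\hat{\mathbf{u}}^{(t)}$; let $S_{\mathbf{u}}^{(t+1)}$ be the indices of the $\min(t+1,k_{\mathbf{u}})$ largest entries of $|\mathbf{r}_{\mathbf{u}}|$ and $S_{\mathbf{v}}^{(t+1)}$ the indices of the $\min(t+1,k_{\mathbf{v}})$ largest entries of $|\mathbf{r}_{\mathbf{v}}|$. Output: the unit-norm leading singular pair $(\hat{\mathbf{u}}^{(k_{\max})},\hat{\mathbf{v}}^{(k_{\max})})$ of $(\widehat{\boldsymbol{\Sigma}}_{xy})_{S_{\mathbf{u}}^{(k_{\max})},S_{\mathbf{v}}^{(k_{\max})}}$,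 zero-padded to $\mathbb{R}^n$. *)

theory Defs
  imports Complex_Main
begin

(* Vectors in R^n are functions nat => real, only the indices 0..<n matter;
   n x n matrices are functions nat => nat => real. *)

definition vinner :: "nat \<Rightarrow> (nat \<Rightarrow> real) \<Rightarrow> (nat \<Rightarrow> real) \<Rightarrow> real" where
  "vinner n a b = (\<Sum>i<n. a i * b i)"

definition vnorm :: "nat \<Rightarrow> (nat \<Rightarrow> real) \<Rightarrow> real" where
  "vnorm n a = sqrt (\<Sum>i<n. (a i)\<^sup>2)"

definition l0norm :: "nat \<Rightarrow> (nat \<Rightarrow> real) \<Rightarrow> nat" where
  "l0norm n a = card {i. i < n \<and> a i \<noteq> 0}"

(* sin of the angle between unit vectors *)
definition sin_angle :: "nat \<Rightarrow> (nat \<Rightarrow> real) \<Rightarrow> (nat \<Rightarrow> real) \<Rightarrow> real" where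
  "sin_angle n a b = sqrt (1 - (vinner n a b)\<^sup>2)"

definition sample_cov :: "nat \<Rightarrow> nat \<Rightarrow> (nat \<Rightarrow> nat \<Rightarrow> real) \<Rightarrow> (nat \<Rightarrow> nat \<Rightarrow> real)
    \<Rightarrow> nat \<Rightarrow> nat \<Rightarrow> real" where
  "sample_cov n m xs ys = (\<lambda>i j. (1 / real m) * (\<Sum>l<m. xs l i * ys l j))"

definition spec_norm_sub :: "(nat \<Rightarrow> nat \<Rightarrow> real) \<Rightarrow> nat set \<Rightarrow> nat set \<Rightarrow> real" where
  "spec_norm_sub M S1 S2 =
     Sup {sqrt (\<Sum>i\<in>S1. (\<Sum>j\<in>S2. M i j * x j)\<^sup>2) | x. (\<Sum>j\<in>S2. (x j)\<^sup>2) \<le> 1}"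

definition event_E :: "real \<Rightarrow> real \<Rightarrow> nat \<Rightarrow> nat \<Rightarrow> nat \<Rightarrow> nat \<Rightarrow> (nat \<Rightarrow> nat \<Rightarrow> real) \<Rightarrow> bool" where
  "event_E CE c' n m ku kv W \<longleftrightarrow>
     (\<forall>S1 S2. S1 \<subseteq> {..<n} \<longrightarrow> S2 \<subseteq> {..<n} \<longrightarrow> card S1 \<le> ku \<longrightarrow> card S2 \<le> kv \<longrightarrow>
        spec_norm_sub W S1 S2
          \<le> CE * sqrt (((real (card S1) + real (card S2)) * ln (real n) + c' * ln (real n)) / real m))"

definition abs_sorted_desc :: "nat \<Rightarrow> (nat \<Rightarrow> real) \<Rightarrow> real list" where
  "abs_sorted_desc n u = rev (sort (map (\<lambda>i. \<bar>u i\<bar>) [0..<n]))"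

definition struct_fun :: "nat \<Rightarrow> (nat \<Rightarrow> real) \<Rightarrow> nat \<Rightarrow> real" where
  "struct_fun n u p = inverse (sum_list (map (\<lambda>x. x\<^sup>2) (take p (abs_sorted_desc n u))))"

definition leading_sing_pair ::
  "(nat \<Rightarrow> nat \<Rightarrow> real) \<Rightarrow> nat set \<Rightarrow> nat set \<Rightarrow> (nat \<Rightarrow> real) \<Rightarrow> (nat \<Rightarrow> real) \<Rightarrow> bool" where
  "leading_sing_pair M S1 S2 a b \<longleftrightarrow>
     (\<forall>i. i \<notin> S1 \<longrightarrow> a i = 0) \<and> (\<forall>j. j \<notin> S2 \<longrightarrow> b j = 0) \<and>
     (\<Sum>i\<in>S1. (a i)\<^sup>2) = 1 \<and> (\<Sum>j\<in>S2. (b j)\<^sup>2) = 1 \<and>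
     (\<forall>i\<in>S1. (\<Sum>j\<in>S2. M i j * b j) = spec_norm_sub M S1 S2 * a i) \<and>
     (\<forall>j\<in>S2. (\<Sum>i\<in>S1. M i j * a i) = spec_norm_sub M S1 S2 * b j)"

(* S is a set of indices of the k largest entries of |r| (any tie-breaking) *)
definition top_k_set :: "nat \<Rightarrow> (nat \<Rightarrow> real) \<Rightarrow> nat \<Rightarrow> nat set \<Rightarrow> bool" where
  "top_k_set n r k S \<longleftrightarrow>
     S \<subseteq> {..<n} \<and> card S = k \<and> (\<forall>i\<in>S. \<forall>j\<in>{..<n} - S. \<bar>r j\<bar> \<le> \<bar>r i\<bar>)"

(* Su, Sv, uh, vh form a run of Bi-SEP on input M, ku, kv (any tie-breaking / any
   choice of leading singular pair); the output is (uh kmax, vh kmax). *)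
definition bisep_run ::
  "nat \<Rightarrow> (nat \<Rightarrow> nat \<Rightarrow> real) \<Rightarrow> nat \<Rightarrow> nat \<Rightarrow> (nat \<Rightarrow> nat set) \<Rightarrow> (nat \<Rightarrow> nat set)
     \<Rightarrow> (nat \<Rightarrow> nat \<Rightarrow> real) \<Rightarrow> (nat \<Rightarrow> nat \<Rightarrow> real) \<Rightarrow> bool" where
  "bisep_run n M ku kv Su Sv uh vh \<longleftrightarrow>
     (\<exists>i0 j0. i0 < n \<and> j0 < n \<and> (\<forall>i<n. \<forall>j<n. \<bar>M i j\<bar> \<le> \<bar>M i0 j0\<bar>) \<and>
        Su 0 = {i0} \<and> Sv 0 = {j0}) \<and>
     (\<forall>t \<le> max ku kv. leading_sing_pair M (Su t) (Sv t) (uh t) (vh t)) \<and>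
     (\<forall>t < max ku kv.
        top_k_set n (\<lambda>i. \<Sum>j<n. M i j * vh t j) (min (t + 1) ku) (Su (Suc t)) \<and>
        top_k_set n (\<lambda>j. \<Sum>i<n. M i j * uh t i) (min (t + 1) kv) (Sv (Suc t)))"

end

theory Submission
  imports Defs "HOL-Analysis.L2_Norm" "HOL-Library.Multiset"
begin

text \<open>
  Write the sample cross-covariance as \<open>M = \<rho> u v\<^sup>T + W\<close>. On the event \<open>E\<close> the noise \<open>W\<close>
  is small on every submatrix of the sizes that occur, and the sample-size condition makes
  it a hundredth of \<open>\<rho>\<close> times the square roots of the top-\<open>t\<close> energies of \<open>u\<close> and \<open>v\<close>
  (the inverses of \<open>s\<^sub>u(t)\<close> and \<open>s\<^sub>v(t)\<close>).
  By induction on \<open>t\<close>, the supports \<open>S\<^sub>u\<^sup>t\<close> and \<open>S\<^sub>v\<^sup>t\<close> keep at least half of the best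
  possible \<open>L\<^sup>2\<close> mass of \<open>u\<close> and \<open>v\<close> at their size: the leading singular pair of
  \<open>M\<close> on such supports is correlated with \<open>(u, v)\<close>, so the scores \<open>M v'\<close> and
  \<open>M\<^sup>T u'\<close> of the current singular vectors \<open>u'\<close>, \<open>v'\<close> are multiples of \<open>u\<close> and \<open>v\<close>
  up to noise, and top-\<open>k\<close> selection keeps most of the mass. In the last step the supports have the full sizes \<open>k\<^sub>u\<close>,
  \<open>k\<^sub>v\<close>, the selection misses only noise-level mass, and the restricted singular vector
  is within \<open>O(|W| / \<rho>)\<close> of \<open>u\<close>. This bound does not even need the slack
  \<open>\<surd>(1 - \<gamma>)\<close>.
\<close>

section \<open>Norms of restricted vectors and submatrices\<close>

lemma L2_set_power2: "(L2_set f A)\<^sup>2 = (\<Sum>i\<in>A. (f i)\<^sup>2)"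
  unfolding L2_set_def by (simp add: sum_nonneg)

lemma L2_set_le_1_iff: "L2_set f A \<le> 1 \<longleftrightarrow> (\<Sum>i\<in>A. (f i)\<^sup>2) \<le> 1"
  unfolding L2_set_def by simp

lemma L2_set_eq_1_iff: "L2_set f A = 1 \<longleftrightarrow> (\<Sum>i\<in>A. (f i)\<^sup>2) = 1"
  unfolding L2_set_def by simp

lemma vnorm_eq_L2_set: "vnorm n u = L2_set u {..<n}"
  unfolding vnorm_def L2_set_def ..

lemma abs_sum_mult_le_L2_set: "\<bar>\<Sum>i\<in>A. f i * g i\<bar> \<le> L2_set f A * L2_set g A"
proof -
  have "\<bar>\<Sum>i\<in>A. f i * g i\<bar> \<le> (\<Sum>i\<in>A. \<bar>f i\<bar> * \<bar>g i\<bar>)"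
    using sum_abs[of "\<lambda>i. f i * g i" A] by (simp add: abs_mult)
  also have "\<dots> \<le> L2_set f A * L2_set g A" by (rule L2_set_mult_ineq)
  finally show ?thesis .
qed

lemma L2_set_scale: "L2_set (\<lambda>i. c * f i) A = \<bar>c\<bar> * L2_set f A"
  unfolding L2_set_def by (simp add: power_mult_distrib real_sqrt_mult flip: sum_distrib_left)

lemma L2_set_diff_le: "L2_set (\<lambda>i. f i - g i) A \<le> L2_set f A + L2_set g A"
  using L2_set_triangle_ineq[of f "\<lambda>i. - g i" A] by (simp add: L2_set_def)

lemma L2_set_eq_on_support:
  assumes "X \<subseteq> A" "finite A" "\<forall>i\<in>A - X. f i = 0"
  shows "L2_set f A = L2_set f X"
  unfolding L2_set_def using assms by (simp add: sum.mono_neutral_right)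

lemma L2_set_dual_attained: "\<exists>b. L2_set b A \<le> 1 \<and> (\<Sum>i\<in>A. b i * g i) = L2_set g A"
proof (cases "L2_set g A = 0")
  case True
  then show ?thesis by (intro exI[of _ "\<lambda>_. 0"]) (simp add: L2_set_0')
next
  case False
  then have pos: "0 < L2_set g A" using L2_set_nonneg[of g A] by linarith
  have "L2_set (\<lambda>i. inverse (L2_set g A) * g i) A = 1"
    using pos by (simp add: L2_set_scale)
  moreover have "(\<Sum>i\<in>A. g i / L2_set g A * g i) = (\<Sum>i\<in>A. (g i)\<^sup>2) / L2_set g A"
    by (simp add: power2_eq_square sum_divide_distrib)
  moreover have "(\<Sum>i\<in>A. (g i)\<^sup>2) / L2_set g A = L2_set g A"
    using pos by (metis L2_set_power2 power2_eq_square nonzero_mult_div_cancel_right less_irrefl)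
  ultimately show ?thesis
    by (intro exI[of _ "\<lambda>i. g i / L2_set g A"]) (simp add: divide_inverse mult.commute)
qed

definition mat_vec :: "(nat \<Rightarrow> nat \<Rightarrow> real) \<Rightarrow> nat set \<Rightarrow> (nat \<Rightarrow> real) \<Rightarrow> nat \<Rightarrow> real" where
  "mat_vec M Y b i = (\<Sum>j\<in>Y. M i j * b j)"

definition mtransp :: "(nat \<Rightarrow> nat \<Rightarrow> real) \<Rightarrow> nat \<Rightarrow> nat \<Rightarrow> real" where
  "mtransp M i j = M j i"

definition rank_one_residual ::
  "(nat \<Rightarrow> nat \<Rightarrow> real) \<Rightarrow> real \<Rightarrow> (nat \<Rightarrow> real) \<Rightarrow> (nat \<Rightarrow> real) \<Rightarrow> nat \<Rightarrow> nat \<Rightarrow> real" where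
  "rank_one_residual M \<rho> u v i j = M i j - \<rho> * u i * v j"

lemma mtransp_mtransp [simp]: "mtransp (mtransp M) = M"
  by (simp add: mtransp_def fun_eq_iff)

lemma mtransp_rank_one_residual:
  "mtransp (rank_one_residual M \<rho> u v) = rank_one_residual (mtransp M) \<rho> v u"
  by (simp add: mtransp_def rank_one_residual_def fun_eq_iff)

lemma mat_vec_rank_one_split:
  "mat_vec M Y b i = \<rho> * (\<Sum>j\<in>Y. v j * b j) * u i + mat_vec (rank_one_residual M \<rho> u v) Y b i"
  unfolding mat_vec_def rank_one_residual_def
  by (simp add: algebra_simps sum_subtractf sum_distrib_left)

lemma sum_mult_mat_vec_rank_one_split:
  "(\<Sum>i\<in>X. a i * mat_vec M Y b i) = \<rho> * (\<Sum>j\<in>Y. v j * b j) * (\<Sum>i\<in>X. a i * u i)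
     + (\<Sum>i\<in>X. a i * mat_vec (rank_one_residual M \<rho> u v) Y b i)"
proof -
  have "(\<Sum>i\<in>X. a i * mat_vec M Y b i) = (\<Sum>i\<in>X. \<rho> * (\<Sum>j\<in>Y. v j * b j) * (a i * u i)
      + a i * mat_vec (rank_one_residual M \<rho> u v) Y b i)"
    by (rule sum.cong) (simp_all add: mat_vec_rank_one_split[of M Y b _ \<rho> v u] algebra_simps)
  then show ?thesis by (simp add: sum.distrib sum_distrib_left)
qed

lemma sum_lessThan_mult_rank_one_split:
  assumes "Y \<subseteq> {..<n}" "\<forall>j. j \<notin> Y \<longrightarrow> b j = 0"
  shows "(\<Sum>j<n. M i j * b j) = \<rho> * (\<Sum>j\<in>Y. v j * b j) * u i + mat_vec (rank_one_residual M \<rho> u v) Y b i"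
proof -
  have "(\<Sum>j<n. M i j * b j) = mat_vec M Y b i"
    unfolding mat_vec_def using assms by (intro sum.mono_neutral_right) auto
  then show ?thesis by (simp add: mat_vec_rank_one_split)
qed

lemma sum_mult_mat_vec_mtransp:
  "(\<Sum>j\<in>Y. b j * mat_vec (mtransp M) X a j) = (\<Sum>i\<in>X. a i * mat_vec M Y b i)"
  unfolding mat_vec_def mtransp_def
  by (simp add: sum_distrib_left mult_ac sum.swap[of _ Y X])

definition sub_op_norm_le :: "(nat \<Rightarrow> nat \<Rightarrow> real) \<Rightarrow> nat set \<Rightarrow> nat set \<Rightarrow> real \<Rightarrow> bool" where
  "sub_op_norm_le W X Y e \<longleftrightarrow> (\<forall>b. L2_set b Y \<le> 1 \<longrightarrow> L2_set (mat_vec W Y b) X \<le> e)"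

lemma sub_op_norm_leD: "sub_op_norm_le W X Y e \<Longrightarrow> L2_set b Y \<le> 1 \<Longrightarrow> L2_set (mat_vec W Y b) X \<le> e"
  unfolding sub_op_norm_le_def by blast

lemma sub_op_norm_le_mono: "sub_op_norm_le W X Y e \<Longrightarrow> e \<le> e' \<Longrightarrow> sub_op_norm_le W X Y e'"
  unfolding sub_op_norm_le_def by (meson order_trans)

lemma sub_op_norm_le_nonneg:
  assumes "sub_op_norm_le W X Y e"
  shows "0 \<le> e"
proof -
  have "L2_set (\<lambda>_. 0) Y \<le> 1" by (simp add: L2_set_0')
  from sub_op_norm_leD[OF assms this] show ?thesis by (meson L2_set_nonneg order_trans)
qed

lemma sum_mult_mat_vec_le:
  assumes "sub_op_norm_le W X Y e" "L2_set a X \<le> 1" "L2_set b Y \<le> 1"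
  shows "\<bar>\<Sum>i\<in>X. a i * mat_vec W Y b i\<bar> \<le> e"
proof -
  have "\<bar>\<Sum>i\<in>X. a i * mat_vec W Y b i\<bar> \<le> L2_set a X * L2_set (mat_vec W Y b) X"
    by (rule abs_sum_mult_le_L2_set)
  also have "\<dots> \<le> 1 * e"
    using assms sub_op_norm_leD[OF assms(1,3)] by (intro mult_mono) auto
  finally show ?thesis by simp
qed

lemma sub_op_norm_le_mtransp:
  assumes "sub_op_norm_le W X Y e"
  shows "sub_op_norm_le (mtransp W) Y X e"
  unfolding sub_op_norm_le_def
proof (intro allI impI)
  fix a assume a: "L2_set a X \<le> 1"
  obtain b where b: "L2_set b Y \<le> 1" "(\<Sum>j\<in>Y. b j * mat_vec (mtransp W) X a j) = L2_set (mat_vec (mtransp W) X a) Y"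
    using L2_set_dual_attained by blast
  have "L2_set (mat_vec (mtransp W) X a) Y = (\<Sum>i\<in>X. a i * mat_vec W Y b i)"
    using b(2) by (simp add: sum_mult_mat_vec_mtransp)
  also have "\<dots> \<le> e" using sum_mult_mat_vec_le[OF assms a b(1)] by linarith
  finally show "L2_set (mat_vec (mtransp W) X a) Y \<le> e" .
qed

lemma abs_entry_le_sub_op_norm: "sub_op_norm_le W {i} {j} e \<Longrightarrow> \<bar>W i j\<bar> \<le> e"
  using sub_op_norm_leD[of W "{i}" "{j}" e "\<lambda>x. if x = j then 1 else 0"] by (simp add: mat_vec_def)

lemma sub_op_norm_le_spec_norm_sub: "sub_op_norm_le M X Y (spec_norm_sub M X Y)"
  unfolding sub_op_norm_le_def
proof (intro allI impI)
  fix x assume x: "L2_set x Y \<le> 1"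
  have bdd: "bdd_above {sqrt (\<Sum>i\<in>X. (\<Sum>j\<in>Y. M i j * x j)\<^sup>2) | x. (\<Sum>j\<in>Y. (x j)\<^sup>2) \<le> 1}"
  proof (rule bdd_aboveI, clarify)
    fix y :: "nat \<Rightarrow> real" assume y: "(\<Sum>j\<in>Y. (y j)\<^sup>2) \<le> 1"
    have "(\<Sum>j\<in>Y. M i j * y j)\<^sup>2 \<le> (L2_set (M i) Y)\<^sup>2" for i
    proof -
      have "\<bar>\<Sum>j\<in>Y. M i j * y j\<bar> \<le> L2_set (M i) Y * L2_set y Y" by (rule abs_sum_mult_le_L2_set)
      also have "\<dots> \<le> L2_set (M i) Y" using y by (simp add: mult_left_le L2_set_le_1_iff)
      finally show ?thesis by (metis abs_le_square_iff abs_of_nonneg L2_set_nonneg)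
    qed
    then have "(\<Sum>i\<in>X. (\<Sum>j\<in>Y. M i j * y j)\<^sup>2) \<le> (\<Sum>i\<in>X. (L2_set (M i) Y)\<^sup>2)"
      by (rule sum_mono)
    then show "sqrt (\<Sum>i\<in>X. (\<Sum>j\<in>Y. M i j * y j)\<^sup>2) \<le> sqrt (\<Sum>i\<in>X. (L2_set (M i) Y)\<^sup>2)"
      by simp
  qed
  have "L2_set (mat_vec M Y x) X = sqrt (\<Sum>i\<in>X. (\<Sum>j\<in>Y. M i j * x j)\<^sup>2)"
    unfolding L2_set_def mat_vec_def ..
  also have "\<dots> \<le> spec_norm_sub M X Y"
    unfolding spec_norm_sub_def using x by (intro cSup_upper[OF _ bdd]) (auto simp: L2_set_le_1_iff)
  finally show "L2_set (mat_vec M Y x) X \<le> spec_norm_sub M X Y" .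
qed

lemma sub_op_norm_le_if_spec_norm_sub_le: "spec_norm_sub M X Y \<le> e \<Longrightarrow> sub_op_norm_le M X Y e"
  by (rule sub_op_norm_le_mono[OF sub_op_norm_le_spec_norm_sub])

section \<open>Leading singular pairs of a perturbed rank-one matrix\<close>

definition top_singular_pair ::
  "(nat \<Rightarrow> nat \<Rightarrow> real) \<Rightarrow> nat set \<Rightarrow> nat set \<Rightarrow> (nat \<Rightarrow> real) \<Rightarrow> (nat \<Rightarrow> real) \<Rightarrow> real \<Rightarrow> bool" where
  "top_singular_pair M X Y a b \<sigma> \<longleftrightarrow>
     (\<forall>i. i \<notin> X \<longrightarrow> a i = 0) \<and> (\<forall>j. j \<notin> Y \<longrightarrow> b j = 0) \<and> L2_set a X = 1 \<and> L2_set b Y = 1 \<and>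
     (\<forall>i\<in>X. mat_vec M Y b i = \<sigma> * a i) \<and> (\<forall>j\<in>Y. mat_vec (mtransp M) X a j = \<sigma> * b j) \<and>
     (\<forall>a' b'. L2_set a' X \<le> 1 \<longrightarrow> L2_set b' Y \<le> 1 \<longrightarrow> (\<Sum>i\<in>X. a' i * mat_vec M Y b' i) \<le> \<sigma>)"

lemma top_singular_pair_if_leading_sing_pair:
  assumes "leading_sing_pair M X Y a b"
  shows "top_singular_pair M X Y a b (spec_norm_sub M X Y)"
proof -
  have "(\<Sum>i\<in>X. a' i * mat_vec M Y b' i) \<le> spec_norm_sub M X Y"
    if "L2_set a' X \<le> 1" "L2_set b' Y \<le> 1" for a' b'
    using sum_mult_mat_vec_le[OF sub_op_norm_le_spec_norm_sub[of M X Y] that] by linarith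
  then show ?thesis
    using assms unfolding top_singular_pair_def leading_sing_pair_def mat_vec_def mtransp_def
    by (auto simp: L2_set_eq_1_iff)
qed

lemma top_singular_pair_mtransp:
  "top_singular_pair M X Y a b \<sigma> \<Longrightarrow> top_singular_pair (mtransp M) Y X b a \<sigma>"
  unfolding top_singular_pair_def by (auto simp: sum_mult_mat_vec_mtransp)

lemma top_singular_pair_value:
  assumes "top_singular_pair M X Y a b \<sigma>"
  shows "\<sigma> = (\<Sum>i\<in>X. a i * mat_vec M Y b i)"
proof -
  have "(\<Sum>i\<in>X. a i * mat_vec M Y b i) = \<sigma> * (\<Sum>i\<in>X. (a i)\<^sup>2)"
    using assms unfolding top_singular_pair_def
    by (simp add: sum_distrib_left power2_eq_square mult_ac)
  also have "\<dots> = \<sigma>"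
    using assms unfolding top_singular_pair_def by (simp add: L2_set_eq_1_iff)
  finally show ?thesis by simp
qed

text \<open>Testing the variational characterisation of \<open>\<sigma>\<close> with the normalised
  restrictions of \<open>u\<close> and \<open>v\<close>.\<close>
lemma top_singular_value_ge:
  assumes "top_singular_pair M X Y a b \<sigma>" "sub_op_norm_le (rank_one_residual M \<rho> u v) X Y e"
  shows "\<rho> * L2_set u X * L2_set v Y - e \<le> \<sigma>"
proof -
  obtain a' where a': "L2_set a' X \<le> 1" "(\<Sum>i\<in>X. a' i * u i) = L2_set u X"
    using L2_set_dual_attained by blast
  obtain b' where b': "L2_set b' Y \<le> 1" "(\<Sum>j\<in>Y. b' j * v j) = L2_set v Y"
    using L2_set_dual_attained by blast
  let ?w = "mat_vec (rank_one_residual M \<rho> u v) Y b'"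
  have "(\<Sum>i\<in>X. a' i * mat_vec M Y b' i)
      = \<rho> * (\<Sum>j\<in>Y. v j * b' j) * (\<Sum>i\<in>X. a' i * u i) + (\<Sum>i\<in>X. a' i * ?w i)"
    by (rule sum_mult_mat_vec_rank_one_split)
  also have "\<dots> = \<rho> * L2_set u X * L2_set v Y + (\<Sum>i\<in>X. a' i * ?w i)"
    using a'(2) b'(2) by (simp add: mult_ac)
  finally have "\<rho> * L2_set u X * L2_set v Y - e \<le> (\<Sum>i\<in>X. a' i * mat_vec M Y b' i)"
    using sum_mult_mat_vec_le[OF assms(2) a'(1) b'(1)] by linarith
  also have "\<dots> \<le> \<sigma>" using assms(1) a'(1) b'(1) unfolding top_singular_pair_def by blast
  finally show ?thesis .
qed

lemma top_singular_pair_correlation: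
  assumes "top_singular_pair M X Y a b \<sigma>" "sub_op_norm_le (rank_one_residual M \<rho> u v) X Y e"
    and "0 \<le> \<rho>"
  shows "\<rho> * L2_set u X * L2_set v Y - 2 * e
    \<le> \<rho> * \<bar>\<Sum>i\<in>X. a i * u i\<bar> * \<bar>\<Sum>j\<in>Y. v j * b j\<bar>"
proof -
  let ?w = "mat_vec (rank_one_residual M \<rho> u v) Y b"
  have unit: "L2_set a X \<le> 1" "L2_set b Y \<le> 1"
    using assms(1) unfolding top_singular_pair_def by auto
  have "\<sigma> = \<rho> * (\<Sum>j\<in>Y. v j * b j) * (\<Sum>i\<in>X. a i * u i) + (\<Sum>i\<in>X. a i * ?w i)"
    unfolding top_singular_pair_value[OF assms(1)] by (rule sum_mult_mat_vec_rank_one_split)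
  also have "\<dots> \<le> \<rho> * \<bar>\<Sum>i\<in>X. a i * u i\<bar> * \<bar>\<Sum>j\<in>Y. v j * b j\<bar> + e"
  proof -
    let ?p = "\<Sum>i\<in>X. a i * u i" and ?q = "\<Sum>j\<in>Y. v j * b j"
    have "\<rho> * ?q * ?p \<le> \<bar>\<rho> * ?q * ?p\<bar>" by (rule abs_ge_self)
    also have "\<dots> = \<rho> * \<bar>?p\<bar> * \<bar>?q\<bar>" using assms(3) by (simp add: abs_mult)
    finally show ?thesis using sum_mult_mat_vec_le[OF assms(2) unit] by linarith
  qed
  finally show ?thesis using top_singular_value_ge[OF assms(1,2)] by linarith
qed

section \<open>Top-\<open>k\<close> selection\<close>

lemma sum_le_sum_if_dominated:
  fixes f :: "'a \<Rightarrow> real"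
  assumes "finite X" "finite Y" "card X \<le> card Y"
    and "\<forall>x\<in>X. \<forall>y\<in>Y. f x \<le> f y" "\<forall>y\<in>Y. 0 \<le> f y"
  shows "sum f X \<le> sum f Y"
proof (cases "X = {}")
  case True
  then show ?thesis using assms(5) by (simp add: sum_nonneg)
next
  case False
  then have "Y \<noteq> {}" using assms(1,3) by auto
  define m where "m = Min (f ` Y)"
  have "\<forall>x\<in>X. f x \<le> m" "\<forall>y\<in>Y. m \<le> f y" "0 \<le> m"
    unfolding m_def using assms(2,4,5) \<open>Y \<noteq> {}\<close> by auto
  then have "sum f X \<le> of_nat (card X) * m" "of_nat (card Y) * m \<le> sum f Y"
    using sum_bounded_above[of X f m] sum_bounded_below[of Y m f] by auto
  moreover have "of_nat (card X) * m \<le> of_nat (card Y) * m"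
    using assms(3) \<open>0 \<le> m\<close> by (intro mult_right_mono) auto
  ultimately show ?thesis by linarith
qed

lemma sum_le_sum_top:
  fixes f :: "'a \<Rightarrow> real"
  assumes "finite A" "S \<subseteq> A" "T \<subseteq> A" "card T \<le> card S"
    and "\<forall>i\<in>S. \<forall>j\<in>A - S. f j \<le> f i" "\<forall>i\<in>A. 0 \<le> f i"
  shows "sum f T \<le> sum f S"
proof -
  have fin: "finite S" "finite T" using assms(1-3) finite_subset by auto
  have "card (T \<inter> S) + card (T - S) \<le> card (S \<inter> T) + card (S - T)"
    using assms(4) fin by (simp add: card_Int_Diff[symmetric])
  then have "sum f (T - S) \<le> sum f (S - T)"
    using fin assms by (intro sum_le_sum_if_dominated) (auto simp: Int_commute)
  moreover have "sum f T = sum f (T \<inter> S) + sum f (T - S)" "sum f S = sum f (S \<inter> T) + sum f (S - T)"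
    using fin by (simp_all add: sum.Int_Diff)
  ultimately show ?thesis by (simp add: Int_commute)
qed

lemma top_k_set_sum_power2_le:
  assumes "top_k_set n r k S" "T \<subseteq> {..<n}" "card T \<le> k"
  shows "(\<Sum>i\<in>T. (r i)\<^sup>2) \<le> (\<Sum>i\<in>S. (r i)\<^sup>2)"
  using assms unfolding top_k_set_def
  by (intro sum_le_sum_top[of "{..<n}"]) (auto simp: abs_le_square_iff)

lemma top_k_selection_captures:
  assumes "top_k_set n (\<lambda>i. c * u i + w i) k S" "T \<subseteq> {..<n}" "card T \<le> k"
    and "L2_set w S \<le> e" "L2_set w T \<le> e"
  shows "\<bar>c\<bar> * L2_set u T \<le> \<bar>c\<bar> * L2_set u S + 2 * e"
proof -
  let ?r = "\<lambda>i. c * u i + w i"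
  have "L2_set ?r T \<le> L2_set ?r S"
    unfolding L2_set_def using top_k_set_sum_power2_le[OF assms(1-3)] by simp
  have "\<bar>c\<bar> * L2_set u T = L2_set (\<lambda>i. ?r i - w i) T" by (simp add: L2_set_scale)
  also have "\<dots> \<le> L2_set ?r T + L2_set w T" by (rule L2_set_diff_le)
  also have "\<dots> \<le> L2_set ?r S + e" using \<open>L2_set ?r T \<le> L2_set ?r S\<close> assms(5) by simp
  also have "L2_set ?r S \<le> L2_set (\<lambda>i. c * u i) S + L2_set w S" by (rule L2_set_triangle_ineq)
  finally show ?thesis using assms(4) by (simp add: L2_set_scale)
qed

text \<open>Once \<open>k\<close> is at least the sparsity of \<open>u\<close>, the score of every missed index of the
  support is dominated by that of a selected index outside the support, where the score is
  pure noise.\<close>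
lemma top_k_selection_misses:
  assumes "top_k_set n (\<lambda>i. c * u i + w i) k S" "l0norm n u \<le> k"
    and "L2_set w ({i. i < n \<and> u i \<noteq> 0} - S) \<le> e" "L2_set w (S - {i. i < n \<and> u i \<noteq> 0}) \<le> e"
  shows "\<bar>c\<bar> * L2_set u ({..<n} - S) \<le> 2 * e"
proof -
  define U where "U = {i. i < n \<and> u i \<noteq> 0}"
  let ?r = "\<lambda>i. c * u i + w i"
  have S: "S \<subseteq> {..<n}" "finite S" using assms(1) finite_subset unfolding top_k_set_def by auto
  have "finite U" unfolding U_def by simp
  have "(\<Sum>i\<in>U. (?r i)\<^sup>2) \<le> (\<Sum>i\<in>S. (?r i)\<^sup>2)"
    using assms(2) unfolding l0norm_def U_def[symmetric]
    by (intro top_k_set_sum_power2_le[OF assms(1)]) (auto simp: U_def)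
  moreover have "(\<Sum>i\<in>U. (?r i)\<^sup>2) = (\<Sum>i\<in>U \<inter> S. (?r i)\<^sup>2) + (\<Sum>i\<in>U - S. (?r i)\<^sup>2)"
    "(\<Sum>i\<in>S. (?r i)\<^sup>2) = (\<Sum>i\<in>S \<inter> U. (?r i)\<^sup>2) + (\<Sum>i\<in>S - U. (?r i)\<^sup>2)"
    using \<open>finite U\<close> S(2) by (simp_all add: sum.Int_Diff)
  ultimately have "L2_set ?r (U - S) \<le> L2_set ?r (S - U)"
    unfolding L2_set_def by (simp add: Int_commute)
  also have "L2_set ?r (S - U) = L2_set w (S - U)"
    using S(1) by (intro L2_set_cong) (auto simp: U_def)
  finally have r_missed: "L2_set ?r (U - S) \<le> e" using assms(4) unfolding U_def by simp
  have "\<bar>c\<bar> * L2_set u ({..<n} - S) = \<bar>c\<bar> * L2_set u (U - S)"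
    by (subst L2_set_eq_on_support[of "U - S"]) (auto simp: U_def)
  also have "\<dots> = L2_set (\<lambda>i. ?r i - w i) (U - S)" by (simp add: L2_set_scale)
  also have "\<dots> \<le> L2_set ?r (U - S) + L2_set w (U - S)" by (rule L2_set_diff_le)
  also have "\<dots> \<le> 2 * e" using r_missed assms(3) unfolding U_def by simp
  finally show ?thesis .
qed

section \<open>Energy of the largest entries\<close>

lemma vnorm_eq_1_iff: "vnorm n u = 1 \<longleftrightarrow> (\<Sum>i<n. (u i)\<^sup>2) = 1"
  unfolding vnorm_def by simp

lemma sum_power2_support:
  fixes u :: "nat \<Rightarrow> real"
  shows "(\<Sum>i\<in>{i. i < n \<and> u i \<noteq> 0}. (u i)\<^sup>2) = (\<Sum>i<n. (u i)\<^sup>2)"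
  by (rule sum.mono_neutral_left) auto

definition top_energy :: "nat \<Rightarrow> (nat \<Rightarrow> real) \<Rightarrow> nat \<Rightarrow> real" where
  "top_energy n u k = sum_list (map (\<lambda>x. x\<^sup>2) (take k (abs_sorted_desc n u)))"

lemma struct_fun_eq_inverse_top_energy: "struct_fun n u k = inverse (top_energy n u k)"
  unfolding struct_fun_def top_energy_def ..

lemma top_energy_eq_sum_top:
  obtains T where "T \<subseteq> {..<n}" "card T = min k n" "top_energy n u k = (\<Sum>i\<in>T. (u i)\<^sup>2)"
    "\<forall>i\<in>T. \<forall>j\<in>{..<n} - T. (u j)\<^sup>2 \<le> (u i)\<^sup>2"
proof -
  define g where "g i = \<bar>u i\<bar>" for i
  define R where "R = rev (sort_key g [0..<n])"
  have "sort (map g [0..<n]) = map g (sort_key g [0..<n])"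
    by (rule properties_for_sort) simp_all
  then have sorted_R: "abs_sorted_desc n u = map g R"
    unfolding abs_sorted_desc_def R_def g_def by (simp add: rev_map)
  have R: "distinct R" "set R = {..<n}" "length R = n" unfolding R_def by auto
  have "sorted_wrt (\<lambda>x y. g x \<le> g y) (sort_key g [0..<n])"
    using sorted_sort_key[of g "[0..<n]"] by (simp add: sorted_wrt_map)
  then have desc: "sorted_wrt (\<lambda>x y. g y \<le> g x) (take k R @ drop k R)"
    unfolding R_def by (simp add: sorted_wrt_rev)
  show ?thesis
  proof
    show "set (take k R) \<subseteq> {..<n}" using R(2) set_take_subset by metis
    show "card (set (take k R)) = min k n" using R by (simp add: distinct_card)
    show "top_energy n u k = (\<Sum>i\<in>set (take k R). (u i)\<^sup>2)"
      unfolding top_energy_def sorted_R take_map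
      using R(1) by (simp add: comp_def g_def sum_list_distinct_conv_sum_set)
    show "\<forall>i\<in>set (take k R). \<forall>j\<in>{..<n} - set (take k R). (u j)\<^sup>2 \<le> (u i)\<^sup>2"
    proof (intro ballI)
      fix i j assume "i \<in> set (take k R)" "j \<in> {..<n} - set (take k R)"
      moreover have "j \<in> set (drop k R)"
        using \<open>j \<in> {..<n} - set (take k R)\<close> R(2)
        by (metis DiffE Un_iff append_take_drop_id set_append)
      ultimately have "g j \<le> g i" using desc unfolding sorted_wrt_append by blast
      then show "(u j)\<^sup>2 \<le> (u i)\<^sup>2" unfolding g_def by (simp add: abs_le_square_iff)
    qed
  qed
qed

lemma top_energy_attained: "\<exists>T \<subseteq> {..<n}. card T \<le> k \<and> top_energy n u k = (\<Sum>i\<in>T. (u i)\<^sup>2)"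
  by (metis top_energy_eq_sum_top min.cobounded1)

lemma sum_le_top_energy:
  assumes "T \<subseteq> {..<n}" "card T \<le> k"
  shows "(\<Sum>i\<in>T. (u i)\<^sup>2) \<le> top_energy n u k"
proof -
  obtain T0 where T0: "T0 \<subseteq> {..<n}" "card T0 = min k n" "top_energy n u k = (\<Sum>i\<in>T0. (u i)\<^sup>2)"
    "\<forall>i\<in>T0. \<forall>j\<in>{..<n} - T0. (u j)\<^sup>2 \<le> (u i)\<^sup>2"
    by (rule top_energy_eq_sum_top)
  have "card T \<le> n" using card_mono[OF _ assms(1)] by simp
  then show ?thesis
    unfolding T0(3) using assms T0 by (intro sum_le_sum_top[of "{..<n}"]) auto
qed

lemma top_energy_nonneg: "0 \<le> top_energy n u k"
  using sum_le_top_energy[of "{}" n k u] by simp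

lemma top_energy_le_sum: "top_energy n u k \<le> (\<Sum>i<n. (u i)\<^sup>2)"
proof -
  obtain T where "T \<subseteq> {..<n}" "top_energy n u k = (\<Sum>i\<in>T. (u i)\<^sup>2)"
    using top_energy_attained by blast
  then show ?thesis by (simp add: sum_mono2)
qed

lemma top_energy_mono: "k \<le> k' \<Longrightarrow> top_energy n u k \<le> top_energy n u k'"
  by (metis top_energy_attained sum_le_top_energy order_trans)

lemma top_energy_full:
  assumes "l0norm n u \<le> k"
  shows "top_energy n u k = (\<Sum>i<n. (u i)\<^sup>2)"
proof -
  have "(\<Sum>i\<in>{i. i < n \<and> u i \<noteq> 0}. (u i)\<^sup>2) \<le> top_energy n u k"
    using assms unfolding l0norm_def by (intro sum_le_top_energy) auto
  then show ?thesis using top_energy_le_sum[of n u k] by (simp add: sum_power2_support)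
qed

lemma top_energy_pos:
  assumes "vnorm n u = 1" "1 \<le> k"
  shows "0 < top_energy n u k"
proof -
  obtain i where "i < n" "u i \<noteq> 0"
    using assms(1) unfolding vnorm_eq_1_iff by (metis (no_types, lifting) power_zero_numeral sum.neutral zero_neq_one lessThan_iff)
  then have "(\<Sum>i\<in>{i}. (u i)\<^sup>2) \<le> top_energy n u k"
    using assms(2) by (intro sum_le_top_energy) auto
  then show ?thesis using \<open>u i \<noteq> 0\<close> by (simp add: less_le_trans[of 0 "(u i)\<^sup>2"])
qed

lemma top_energy_1_attained:
  assumes "0 < top_energy n u 1"
  obtains i where "i < n" "top_energy n u 1 = (u i)\<^sup>2"
proof -
  obtain T where T: "T \<subseteq> {..<n}" "card T \<le> 1" "top_energy n u 1 = (\<Sum>i\<in>T. (u i)\<^sup>2)"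
    using top_energy_attained by blast
  then have "T \<noteq> {}" using assms by auto
  moreover have "finite T" using T(1) finite_subset by blast
  ultimately have "card T = 1" using T(2) by (simp add: card_gt_0_iff Suc_leI le_antisym)
  then obtain i where "T = {i}" by (rule card_1_singletonE)
  then show ?thesis using that T by auto
qed

lemma l0norm_pos: "vnorm n u = 1 \<Longrightarrow> 0 < l0norm n u"
  using top_energy_full[of n u 0] by (auto simp: vnorm_eq_1_iff top_energy_def)

text \<open>If \<open>u\<close> has at most \<open>k + 1\<close> nonzero entries, dropping the smallest one
  loses at most a fraction \<open>1 / (k + 1) \<le> 1/2\<close> of the mass.\<close>
lemma top_energy_ge_half:
  assumes "vnorm n u = 1" "l0norm n u \<le> k + 1" "1 \<le> k"
  shows "1/2 \<le> top_energy n u k"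
proof (cases "l0norm n u \<le> k")
  case True
  then show ?thesis using assms(1) by (simp add: top_energy_full vnorm_eq_1_iff)
next
  case False
  define U where "U = {i. i < n \<and> u i \<noteq> 0}"
  have U: "finite U" "card U = k + 1" "(\<Sum>i\<in>U. (u i)\<^sup>2) = 1"
    using False assms(1,2) unfolding U_def l0norm_def by (auto simp: sum_power2_support vnorm_eq_1_iff)
  then have "U \<noteq> {}" by auto
  obtain j where "is_arg_min (\<lambda>i. (u i)\<^sup>2) (\<lambda>i. i \<in> U) j"
    using ex_is_arg_min_if_finite[OF U(1) \<open>U \<noteq> {}\<close>] by blast
  then have j: "j \<in> U" "\<forall>i\<in>U. (u j)\<^sup>2 \<le> (u i)\<^sup>2" by (simp_all add: is_arg_min_linorder)
  have "of_nat (k + 1) * (u j)\<^sup>2 \<le> 1"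
    using sum_bounded_below[of U "(u j)\<^sup>2" "\<lambda>i. (u i)\<^sup>2"] j U by simp
  moreover have "2 * (u j)\<^sup>2 \<le> of_nat (k + 1) * (u j)\<^sup>2"
    using assms(3) by (intro mult_right_mono) auto
  moreover have "(\<Sum>i\<in>U - {j}. (u i)\<^sup>2) \<le> top_energy n u k"
    using U j(1) by (intro sum_le_top_energy) (auto simp: U_def)
  moreover have "(\<Sum>i\<in>U - {j}. (u i)\<^sup>2) = 1 - (u j)\<^sup>2"
    using U j(1) by (simp add: sum_diff1)
  ultimately show ?thesis by linarith
qed

section \<open>Angles\<close>

lemma sin_angle_le_L2_dist:
  assumes "vnorm n a = 1" "vnorm n u = 1"
  shows "sin_angle n a u \<le> L2_set (\<lambda>i. a i - t * u i) {..<n}"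
proof -
  define p where "p = vinner n a u"
  have "(\<Sum>i<n. (a i - t * u i)\<^sup>2)
      = (\<Sum>i<n. (a i)\<^sup>2) - 2 * t * (\<Sum>i<n. a i * u i) + t\<^sup>2 * (\<Sum>i<n. (u i)\<^sup>2)"
    by (simp add: power2_diff sum.distrib sum_subtractf sum_distrib_left power_mult_distrib mult_ac)
  also have "\<dots> = 1 - 2 * t * p + t\<^sup>2"
    using assms unfolding p_def vinner_def vnorm_eq_1_iff by simp
  finally have "(\<Sum>i<n. (a i - t * u i)\<^sup>2) = 1 - 2 * t * p + t\<^sup>2" .
  moreover have "1 - p\<^sup>2 \<le> 1 - 2 * t * p + t\<^sup>2"
    using zero_le_power2[of "t - p"] by (simp add: power2_diff)
  ultimately show ?thesis unfolding sin_angle_def L2_set_def p_def by simp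
qed

lemma L2_set_restriction_orthogonal_part:
  assumes X: "X \<subseteq> {..<n}" and u: "vnorm n u = 1"
  defines "s \<equiv> \<Sum>i\<in>X. (u i)\<^sup>2"
  shows "L2_set (\<lambda>i. (if i \<in> X then 1 - s else - s) * u i) {..<n} = sqrt s * L2_set u ({..<n} - X)"
proof -
  define h where "h = (\<Sum>i\<in>{..<n} - X. (u i)\<^sup>2)"
  have sh: "s + h = 1"
    using u sum.subset_diff[OF X, of "\<lambda>i. (u i)\<^sup>2"] unfolding s_def h_def vnorm_eq_1_iff by simp
  let ?d = "\<lambda>i. (if i \<in> X then 1 - s else - s) * u i"
  have "(\<Sum>i<n. (?d i)\<^sup>2) = (\<Sum>i\<in>X. (?d i)\<^sup>2) + (\<Sum>i\<in>{..<n} - X. (?d i)\<^sup>2)"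
    using sum.subset_diff[OF X, of "\<lambda>i. (?d i)\<^sup>2"] by simp
  also have "(\<Sum>i\<in>X. (?d i)\<^sup>2) = (\<Sum>i\<in>X. h\<^sup>2 * (u i)\<^sup>2)"
  proof -
    have "1 - s = h" using sh by simp
    then show ?thesis by (intro sum.cong) (simp_all add: power_mult_distrib)
  qed
  also have "\<dots> = h\<^sup>2 * s" by (simp add: s_def sum_distrib_left)
  also have "(\<Sum>i\<in>{..<n} - X. (?d i)\<^sup>2) = s\<^sup>2 * h"
    unfolding h_def by (simp add: power_mult_distrib sum_distrib_left)
  also have "h\<^sup>2 * s + s\<^sup>2 * h = s * h * (s + h)" by (simp add: power2_eq_square algebra_simps)
  finally show ?thesis unfolding L2_set_def h_def[symmetric] sh by (simp add: real_sqrt_mult)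
qed

text \<open>The comparison point on the line through \<open>u\<close> is \<open>c s u\<close> with
  \<open>s = \<Sum>\<^sub>i\<^sub>\<in>\<^sub>X u\<^sub>i\<^sup>2\<close>; the remaining error of the \<open>u\<close>-part is the component of
  \<open>u\<close> restricted to \<open>X\<close> orthogonal to \<open>u\<close>.\<close>
lemma sin_angle_le_perturbed_restriction:
  assumes a: "vnorm n a = 1" "\<forall>i. i \<notin> X \<longrightarrow> a i = 0" and u: "vnorm n u = 1"
    and X: "X \<subseteq> {..<n}" and decomp: "\<forall>i\<in>X. a i = c * u i + w i" and w: "L2_set w X \<le> \<delta>"
  shows "sin_angle n a u \<le> L2_set u ({..<n} - X) + 2 * \<delta>"
proof -
  define s where "s = (\<Sum>i\<in>X. (u i)\<^sup>2)"
  define \<eta> where "\<eta> = L2_set u ({..<n} - X)"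
  define d where "d i = (if i \<in> X then 1 - s else - s) * u i" for i
  define wX where "wX i = (if i \<in> X then w i else 0)" for i
  have "a i - c * s * u i = wX i + c * d i" for i
    unfolding d_def wX_def using a(2) decomp by (auto simp: algebra_simps)
  then have "sin_angle n a u \<le> L2_set (\<lambda>i. wX i + c * d i) {..<n}"
    using sin_angle_le_L2_dist[OF a(1) u, of "c * s"] by simp
  also have "\<dots> \<le> L2_set wX {..<n} + \<bar>c\<bar> * L2_set d {..<n}"
    using L2_set_triangle_ineq[of wX "\<lambda>i. c * d i"] by (simp add: L2_set_scale)
  also have "L2_set wX {..<n} = L2_set w X"
    using L2_set_eq_on_support[OF X, of wX] by (simp add: wX_def L2_set_def)
  also have "L2_set d {..<n} = sqrt s * \<eta>"
    unfolding d_def s_def \<eta>_def by (rule L2_set_restriction_orthogonal_part[OF X u])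
  finally have dist: "sin_angle n a u \<le> L2_set w X + \<bar>c\<bar> * sqrt s * \<eta>" by (simp add: mult.assoc)
  have "\<bar>c\<bar> * sqrt s = L2_set (\<lambda>i. c * u i) X" by (simp add: L2_set_scale s_def L2_set_def)
  also have "\<dots> = L2_set (\<lambda>i. a i - w i) X" using decomp by (intro L2_set_cong) auto
  also have "\<dots> \<le> L2_set a X + L2_set w X" by (rule L2_set_diff_le)
  also have "L2_set a X = 1"
    using a L2_set_eq_on_support[OF X, of a] by (simp add: vnorm_eq_L2_set)
  finally have "\<bar>c\<bar> * sqrt s * \<eta> \<le> (1 + L2_set w X) * \<eta>"
    by (rule mult_right_mono) (simp add: \<eta>_def)
  moreover have "\<eta> \<le> 1"
    using u X unfolding \<eta>_def vnorm_eq_1_iff L2_set_le_1_iff by (metis Diff_subset finite_lessThan sum_mono2 zero_le_power2)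
  then have "L2_set w X * \<eta> \<le> L2_set w X" by (simp add: mult_left_le)
  ultimately show ?thesis using dist w unfolding \<eta>_def by (simp add: algebra_simps)
qed

lemma sin_angle_le_missed_mass:
  assumes pair: "top_singular_pair M X Y a b \<sigma>" and X: "X \<subseteq> {..<n}" and u: "vnorm n u = 1"
    and "0 < \<sigma>" and noise: "L2_set (mat_vec (rank_one_residual M \<rho> u v) Y b) X \<le> e"
  shows "sin_angle n a u \<le> L2_set u ({..<n} - X) + 2 * e / \<sigma>"
proof -
  let ?w = "mat_vec (rank_one_residual M \<rho> u v) Y b"
  have a: "\<forall>i. i \<notin> X \<longrightarrow> a i = 0" "L2_set a X = 1"
    and eq: "\<forall>i\<in>X. mat_vec M Y b i = \<sigma> * a i"
    using pair unfolding top_singular_pair_def by auto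
  have "vnorm n a = 1"
    using a L2_set_eq_on_support[OF X, of a] by (simp add: vnorm_eq_L2_set)
  moreover have "\<forall>i\<in>X. a i = \<rho> * (\<Sum>j\<in>Y. v j * b j) / \<sigma> * u i + ?w i / \<sigma>"
    using eq \<open>0 < \<sigma>\<close> by (auto simp: mat_vec_rank_one_split[of M Y b _ \<rho> v u] field_simps)
  moreover have "L2_set (\<lambda>i. ?w i / \<sigma>) X \<le> e / \<sigma>"
    using L2_set_scale[of "1 / \<sigma>" ?w X] noise \<open>0 < \<sigma>\<close> by (simp add: divide_right_mono)
  ultimately show ?thesis
    using sin_angle_le_perturbed_restriction[OF _ a(1) u X] by fastforce
qed

section \<open>A run of Bi-SEP\<close>

definition captures :: "nat \<Rightarrow> (nat \<Rightarrow> real) \<Rightarrow> nat \<Rightarrow> nat set \<Rightarrow> bool" where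
  "captures n u k S \<longleftrightarrow> sqrt (top_energy n u k) / 2 \<le> L2_set u S"

text \<open>An abstract run: \<open>\<sigma> t\<close> stands for the leading singular value of the current
  submatrix, and the event \<open>E\<close> together with the sample-size condition enters only
  through \<open>noise_small\<close> and \<open>noise_bounded\<close>.\<close>
locale bisep_analysis =
  fixes n ku kv :: nat and \<rho> B :: real and u v :: "nat \<Rightarrow> real" and M :: "nat \<Rightarrow> nat \<Rightarrow> real"
    and Su Sv :: "nat \<Rightarrow> nat set" and uh vh :: "nat \<Rightarrow> nat \<Rightarrow> real" and \<sigma> :: "nat \<Rightarrow> real"
    and i0 j0 :: nat
  assumes rho_pos: "0 < \<rho>"
    and unit_u: "vnorm n u = 1" and unit_v: "vnorm n v = 1"
    and sparse_u: "l0norm n u \<le> ku" and sparse_v: "l0norm n v \<le> kv"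
    and noise_small: "\<And>t X Y. t \<le> max ku kv \<Longrightarrow> X \<subseteq> {..<n} \<Longrightarrow> Y \<subseteq> {..<n} \<Longrightarrow>
        card X \<le> min (t + 1) ku \<Longrightarrow> card Y \<le> min (t + 1) kv \<Longrightarrow>
        sub_op_norm_le (rank_one_residual M \<rho> u v) X Y
          (\<rho> * sqrt (top_energy n u (min (max t 1) ku)) * sqrt (top_energy n v (min (max t 1) kv)) / 100)"
    and noise_bounded: "\<And>X Y. X \<subseteq> {..<n} \<Longrightarrow> Y \<subseteq> {..<n} \<Longrightarrow> card X \<le> ku \<Longrightarrow> card Y \<le> kv \<Longrightarrow>
        sub_op_norm_le (rank_one_residual M \<rho> u v) X Y B"
    and start: "i0 < n" "j0 < n" "\<forall>i<n. \<forall>j<n. \<bar>M i j\<bar> \<le> \<bar>M i0 j0\<bar>" "Su 0 = {i0}" "Sv 0 = {j0}"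
    and singular_pair: "\<And>t. t \<le> max ku kv \<Longrightarrow> top_singular_pair M (Su t) (Sv t) (uh t) (vh t) (\<sigma> t)"
    and select_u: "\<And>t. t < max ku kv \<Longrightarrow>
        top_k_set n (\<lambda>i. \<Sum>j<n. M i j * vh t j) (min (t + 1) ku) (Su (Suc t))"
    and select_v: "\<And>t. t < max ku kv \<Longrightarrow>
        top_k_set n (\<lambda>j. \<Sum>i<n. M i j * uh t i) (min (t + 1) kv) (Sv (Suc t))"
begin

abbreviation W :: "nat \<Rightarrow> nat \<Rightarrow> real" where
  "W \<equiv> rank_one_residual M \<rho> u v"

text \<open>The setting is symmetric under transposing \<open>M\<close> and exchanging the roles of
  \<open>u\<close> and \<open>v\<close>; this yields every statement about \<open>v\<close> from the one about \<open>u\<close>.\<close>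
lemma transposed: "bisep_analysis n kv ku \<rho> B v u (mtransp M) Sv Su vh uh \<sigma> j0 i0"
proof unfold_locales
  fix t X Y assume "t \<le> max kv ku" "X \<subseteq> {..<n}" "Y \<subseteq> {..<n}"
    "card X \<le> min (t + 1) kv" "card Y \<le> min (t + 1) ku"
  then have "sub_op_norm_le (mtransp W) X Y
      (\<rho> * sqrt (top_energy n u (min (max t 1) ku)) * sqrt (top_energy n v (min (max t 1) kv)) / 100)"
    by (intro sub_op_norm_le_mtransp noise_small) (auto simp: max.commute)
  then show "sub_op_norm_le (rank_one_residual (mtransp M) \<rho> v u) X Y
      (\<rho> * sqrt (top_energy n v (min (max t 1) kv)) * sqrt (top_energy n u (min (max t 1) ku)) / 100)"
    by (simp add: mtransp_rank_one_residual mult_ac)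
next
  fix X Y assume "X \<subseteq> {..<n}" "Y \<subseteq> {..<n}" "card X \<le> kv" "card Y \<le> ku"
  then show "sub_op_norm_le (rank_one_residual (mtransp M) \<rho> v u) X Y B"
    using sub_op_norm_le_mtransp[OF noise_bounded[of Y X]] by (simp add: mtransp_rank_one_residual)
next
  fix t assume "t \<le> max kv ku"
  then show "top_singular_pair (mtransp M) (Sv t) (Su t) (vh t) (uh t) (\<sigma> t)"
    by (intro top_singular_pair_mtransp singular_pair) (simp add: max.commute)
next
  fix t assume "t < max kv ku"
  then show "top_k_set n (\<lambda>i. \<Sum>j<n. mtransp M i j * uh t j) (min (t + 1) kv) (Sv (Suc t))"
    "top_k_set n (\<lambda>j. \<Sum>i<n. mtransp M i j * vh t i) (min (t + 1) ku) (Su (Suc t))"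
    using select_u[of t] select_v[of t] by (simp_all add: mtransp_def max.commute)
qed (use rho_pos unit_u unit_v sparse_u sparse_v start in \<open>auto simp: mtransp_def\<close>)

lemma ku_pos: "1 \<le> ku" and kv_pos: "1 \<le> kv"
  using l0norm_pos[OF unit_u] l0norm_pos[OF unit_v] sparse_u sparse_v by linarith+

lemma supports:
  assumes "t \<le> max ku kv"
  shows "Su t \<subseteq> {..<n}" "card (Su t) = min (max t 1) ku"
    and "Sv t \<subseteq> {..<n}" "card (Sv t) = min (max t 1) kv"
proof -
  have "Su t \<subseteq> {..<n} \<and> card (Su t) = min (max t 1) ku \<and> Sv t \<subseteq> {..<n} \<and> card (Sv t) = min (max t 1) kv"
  proof (cases t)
    case 0
    then show ?thesis using start ku_pos kv_pos by auto
  next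
    case (Suc s)
    then show ?thesis
      using assms select_u[of s] select_v[of s] unfolding top_k_set_def by auto
  qed
  then show "Su t \<subseteq> {..<n}" "card (Su t) = min (max t 1) ku"
    "Sv t \<subseteq> {..<n}" "card (Sv t) = min (max t 1) kv" by auto
qed

lemma singular_vectors:
  assumes "t \<le> max ku kv"
  shows "\<forall>i. i \<notin> Su t \<longrightarrow> uh t i = 0" "\<forall>j. j \<notin> Sv t \<longrightarrow> vh t j = 0"
    and "L2_set (uh t) (Su t) = 1" "L2_set (vh t) (Sv t) = 1"
  using singular_pair[OF assms] unfolding top_singular_pair_def by auto

lemma top_energy_level_pos: "0 < top_energy n u (min (max t 1) ku)" "0 < top_energy n v (min (max t 1) kv)"
  using top_energy_pos[OF unit_u] top_energy_pos[OF unit_v] ku_pos kv_pos by auto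

lemma correlation_v:
  assumes t: "t \<le> max ku kv"
    and cap: "captures n u (min (max t 1) ku) (Su t)" "captures n v (min (max t 1) kv) (Sv t)"
  shows "sqrt (top_energy n v (min (max t 1) kv)) / 4 \<le> \<bar>\<Sum>j\<in>Sv t. v j * vh t j\<bar>"
proof -
  define x where "x = sqrt (top_energy n u (min (max t 1) ku))"
  define y where "y = sqrt (top_energy n v (min (max t 1) kv))"
  define Lu where "Lu = L2_set u (Su t)"
  define Lv where "Lv = L2_set v (Sv t)"
  define p where "p = (\<Sum>i\<in>Su t. uh t i * u i)"
  define q where "q = (\<Sum>j\<in>Sv t. v j * vh t j)"
  have pos: "0 < x" "0 < y" unfolding x_def y_def using top_energy_level_pos by auto
  have Lu: "x / 2 \<le> Lu" and Lv: "y / 2 \<le> Lv"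
    using cap unfolding captures_def x_def y_def Lu_def Lv_def by auto
  have "sub_op_norm_le W (Su t) (Sv t) (\<rho> * x * y / 100)"
    unfolding x_def y_def using supports[OF t] by (intro noise_small[OF t]) auto
  then have "\<rho> * Lu * Lv - 2 * (\<rho> * x * y / 100) \<le> \<rho> * \<bar>p\<bar> * \<bar>q\<bar>"
    unfolding Lu_def Lv_def p_def q_def
    by (rule top_singular_pair_correlation[OF singular_pair[OF t] _ less_imp_le[OF rho_pos]])
  moreover have "\<bar>p\<bar> \<le> Lu"
    using abs_sum_mult_le_L2_set[of "uh t" u "Su t"] singular_vectors[OF t] unfolding p_def Lu_def by simp
  then have "\<rho> * \<bar>p\<bar> * \<bar>q\<bar> \<le> \<rho> * Lu * \<bar>q\<bar>"
    using rho_pos by (intro mult_right_mono mult_left_mono) auto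
  moreover have "\<rho> * Lu * (y / 2) \<le> \<rho> * Lu * Lv"
    using Lv Lu pos rho_pos by (intro mult_left_mono) auto
  moreover have "2 * (\<rho> * x * y / 100) \<le> \<rho> * Lu * (y / 25)"
    using Lu pos rho_pos mult_right_mono[of x "2 * Lu" "\<rho> * y"] by (simp add: algebra_simps)
  ultimately have "\<rho> * Lu * (y / 2 - y / 25) \<le> \<rho> * Lu * \<bar>q\<bar>"
    by (simp add: right_diff_distrib)
  then have "y / 2 - y / 25 \<le> \<bar>q\<bar>"
    using Lu pos rho_pos by (simp add: mult_le_cancel_left_pos)
  then show ?thesis using pos unfolding y_def q_def by linarith
qed

lemma captures_start_u: "captures n u 1 (Su 0)"
proof -
  define x where "x = sqrt (top_energy n u 1)"
  define y where "y = sqrt (top_energy n v 1)"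
  define e where "e = \<rho> * x * y / 100"
  have pos: "0 < x" "0 < y"
    unfolding x_def y_def using top_energy_pos[OF unit_u] top_energy_pos[OF unit_v] by auto
  obtain i1 where i1: "i1 < n" "top_energy n u 1 = (u i1)\<^sup>2"
    using top_energy_1_attained top_energy_pos[OF unit_u order.refl] by blast
  obtain j1 where j1: "j1 < n" "top_energy n v 1 = (v j1)\<^sup>2"
    using top_energy_1_attained top_energy_pos[OF unit_v order.refl] by blast
  have "(v j0)\<^sup>2 \<le> top_energy n v 1"
    using sum_le_top_energy[of "{j0}" n 1 v] start by simp
  then have v0: "\<bar>v j0\<bar> \<le> y" unfolding y_def by (simp add: real_le_rsqrt)
  have W: "\<bar>W i j\<bar> \<le> e" if "i < n" "j < n" for i j
    using abs_entry_le_sub_op_norm[OF noise_small[of 0 "{i}" "{j}"]] that ku_pos kv_pos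
    unfolding e_def x_def y_def by simp
  have "\<rho> * x * y = \<bar>\<rho> * u i1 * v j1\<bar>"
    using i1(2) j1(2) rho_pos unfolding x_def y_def by (simp add: abs_mult)
  also have "\<dots> \<le> \<bar>M i1 j1\<bar> + \<bar>W i1 j1\<bar>"
    using abs_triangle_ineq4[of "M i1 j1" "W i1 j1"] by (simp add: rank_one_residual_def)
  also have "\<bar>M i1 j1\<bar> \<le> \<bar>M i0 j0\<bar>" using start(3) i1 j1 by simp
  also have "\<bar>M i0 j0\<bar> \<le> \<bar>\<rho> * u i0 * v j0\<bar> + \<bar>W i0 j0\<bar>"
    using abs_triangle_ineq[of "\<rho> * u i0 * v j0" "W i0 j0"] by (simp add: rank_one_residual_def)
  also have "\<bar>\<rho> * u i0 * v j0\<bar> \<le> \<rho> * \<bar>u i0\<bar> * y"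
    using v0 rho_pos by (simp add: abs_mult mult_left_mono)
  finally have "\<rho> * y * (x - x / 50) \<le> \<rho> * y * \<bar>u i0\<bar>"
    using W[OF i1(1) j1(1)] W[OF start(1,2)] unfolding e_def by (simp add: algebra_simps)
  then have "x - x / 50 \<le> \<bar>u i0\<bar>" using pos rho_pos by (simp add: mult_le_cancel_left_pos)
  then show ?thesis unfolding captures_def x_def[symmetric] start(4) using pos(1) by simp
qed

lemma captures_step_u:
  assumes t: "t < max ku kv"
    and cap: "captures n u (min (max t 1) ku) (Su t)" "captures n v (min (max t 1) kv) (Sv t)"
  shows "captures n u (min (Suc t) ku) (Su (Suc t))"
proof -
  have t': "t \<le> max ku kv" using t by simp
  define x where "x = sqrt (top_energy n u (min (max t 1) ku))"
  define y where "y = sqrt (top_energy n v (min (max t 1) kv))"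
  define x' where "x' = sqrt (top_energy n u (min (Suc t) ku))"
  define e where "e = \<rho> * x * y / 100"
  define c where "c = \<rho> * (\<Sum>j\<in>Sv t. v j * vh t j)"
  define w where "w = mat_vec W (Sv t) (vh t)"
  have pos: "0 < x" "0 < y" unfolding x_def y_def using top_energy_level_pos by auto
  have "x \<le> x'" unfolding x_def x'_def by (intro real_sqrt_le_mono top_energy_mono) auto
  have "\<rho> * y / 4 \<le> \<bar>c\<bar>"
    using correlation_v[OF t' cap] rho_pos unfolding c_def y_def by (simp add: abs_mult)
  moreover have "0 < \<rho> * y" using pos rho_pos by simp
  ultimately have c_pos: "0 < \<bar>c\<bar>" and "2 * e \<le> \<bar>c\<bar> * (2 * x / 25)"
    using pos mult_right_mono[of "\<rho> * y / 4" "\<bar>c\<bar>" x] unfolding e_def by auto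
  obtain T where T: "T \<subseteq> {..<n}" "card T \<le> min (Suc t) ku" "L2_set u T = x'"
    using top_energy_attained[of n "min (Suc t) ku" u] unfolding x'_def L2_set_def by auto
  have sel: "top_k_set n (\<lambda>i. c * u i + w i) (min (t + 1) ku) (Su (Suc t))"
    using select_u[OF t] unfolding c_def w_def
    by (simp add: sum_lessThan_mult_rank_one_split[where \<rho> = \<rho> and u = u and v = v,
          OF supports(3)[OF t'] singular_vectors(2)[OF t']] mult_ac)
  have noise: "L2_set w X \<le> e" if "X \<subseteq> {..<n}" "card X \<le> min (Suc t) ku" for X
    unfolding w_def e_def x_def y_def using that supports[OF t'] singular_vectors(4)[OF t']
    by (intro sub_op_norm_leD[OF noise_small[OF t']]) auto
  have "\<bar>c\<bar> * x' \<le> \<bar>c\<bar> * L2_set u (Su (Suc t)) + 2 * e"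
    using top_k_selection_captures[OF sel T(1)] T noise supports[of "Suc t"] t by simp
  then have "\<bar>c\<bar> * x' \<le> \<bar>c\<bar> * (L2_set u (Su (Suc t)) + 2 * x / 25)"
    using \<open>2 * e \<le> \<bar>c\<bar> * (2 * x / 25)\<close> unfolding distrib_left by linarith
  then have "x' \<le> L2_set u (Su (Suc t)) + 2 * x / 25"
    using c_pos by (simp add: mult_le_cancel_left_pos)
  then show ?thesis unfolding captures_def x'_def[symmetric] using \<open>x \<le> x'\<close> pos by linarith
qed

lemma captures_all:
  assumes "t \<le> max ku kv"
  shows "captures n u (min (max t 1) ku) (Su t) \<and> captures n v (min (max t 1) kv) (Sv t)"
proof -
  interpret T: bisep_analysis n kv ku \<rho> B v u "mtransp M" Sv Su vh uh \<sigma> j0 i0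
    by (rule transposed)
  show ?thesis using assms
  proof (induction t)
    case 0
    have "min (max 0 1) ku = 1" "min (max 0 1) kv = 1" using ku_pos kv_pos by auto
    then show ?case using captures_start_u T.captures_start_u by simp
  next
    case (Suc t)
    then have t: "t < max ku kv" and t': "t < max kv ku" by auto
    then have IH: "captures n u (min (max t 1) ku) (Su t)" "captures n v (min (max t 1) kv) (Sv t)"
      using Suc.IH by auto
    have "max (Suc t) 1 = Suc t" by simp
    then show ?case using captures_step_u[OF t IH] T.captures_step_u[OF t' IH(2,1)] by simp
  qed
qed


lemma missed_mass_final: "L2_set u ({..<n} - Su (max ku kv)) \<le> 12 * B / \<rho>"
proof -
  define s where "s = max ku kv - 1"
  have K: "max ku kv = Suc s" using ku_pos unfolding s_def by linarith
  then have s: "s \<le> max ku kv" "s < max ku kv" by auto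
  define c where "c = \<rho> * (\<Sum>j\<in>Sv s. v j * vh s j)"
  define w where "w = mat_vec W (Sv s) (vh s)"
  have "1/2 \<le> top_energy n v (min (max s 1) kv)"
    using sparse_v K kv_pos by (intro top_energy_ge_half[OF unit_v]) auto
  then have "(2/3)\<^sup>2 \<le> top_energy n v (min (max s 1) kv)" by (simp add: power2_eq_square)
  then have "2/3 / 4 \<le> \<bar>\<Sum>j\<in>Sv s. v j * vh s j\<bar>"
    using correlation_v[OF s(1)] captures_all[OF s(1)] real_le_rsqrt by fastforce
  then have c: "\<rho> / 6 \<le> \<bar>c\<bar>" using rho_pos unfolding c_def by (simp add: abs_mult)
  have "ku \<le> Suc s" using K by linarith
  then have sel: "top_k_set n (\<lambda>i. c * u i + w i) ku (Su (max ku kv))"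
    using select_u[OF s(2)] unfolding c_def w_def K
    by (simp add: sum_lessThan_mult_rank_one_split[where \<rho> = \<rho> and u = u and v = v,
          OF supports(3)[OF s(1)] singular_vectors(2)[OF s(1)]] mult_ac min_absorb2)
  have noise: "L2_set w X \<le> B" if "X \<subseteq> {..<n}" "card X \<le> ku" for X
    unfolding w_def using that supports[OF s(1)] singular_vectors(4)[OF s(1)] kv_pos
    by (intro sub_op_norm_leD[OF noise_bounded]) auto
  have card_S: "card (Su (max ku kv)) = ku" using sel unfolding top_k_set_def by simp
  have "\<bar>c\<bar> * L2_set u ({..<n} - Su (max ku kv)) \<le> 2 * B"
  proof (rule top_k_selection_misses[OF sel sparse_u])
    show "L2_set w ({i. i < n \<and> u i \<noteq> 0} - Su (max ku kv)) \<le> B"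
      using sparse_u card_mono[of "{i. i < n \<and> u i \<noteq> 0}" "{i. i < n \<and> u i \<noteq> 0} - Su (max ku kv)"]
      unfolding l0norm_def by (intro noise) auto
    show "L2_set w (Su (max ku kv) - {i. i < n \<and> u i \<noteq> 0}) \<le> B"
      using sel card_S card_mono[of "Su (max ku kv)" "Su (max ku kv) - {i. i < n \<and> u i \<noteq> 0}"]
      unfolding top_k_set_def by (intro noise) (auto intro: finite_subset)
  qed
  moreover have "\<rho> / 6 * L2_set u ({..<n} - Su (max ku kv)) \<le> \<bar>c\<bar> * L2_set u ({..<n} - Su (max ku kv))"
    using c by (intro mult_right_mono) auto
  ultimately show ?thesis using rho_pos by (simp add: field_simps)
qed

lemma singular_value_final: "\<rho> / 5 \<le> \<sigma> (max ku kv)"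
proof -
  let ?K = "max ku kv"
  have lvl: "min (max ?K 1) ku = ku" "min (max ?K 1) kv = kv" by auto
  have full: "top_energy n u ku = 1" "top_energy n v kv = 1"
    using top_energy_full[OF sparse_u] top_energy_full[OF sparse_v] unit_u unit_v
    by (simp_all add: vnorm_eq_1_iff)
  have "1/2 \<le> L2_set u (Su ?K)" "1/2 \<le> L2_set v (Sv ?K)"
    using captures_all[of ?K] unfolding captures_def lvl full by auto
  then have "\<rho> * (1/2) * (1/2) \<le> \<rho> * L2_set u (Su ?K) * L2_set v (Sv ?K)"
    using rho_pos by (intro mult_mono mult_left_mono) auto
  moreover have "sub_op_norm_le W (Su ?K) (Sv ?K) (\<rho> * 1 * 1 / 100)"
    using noise_small[of ?K "Su ?K" "Sv ?K"] supports[of ?K] unfolding lvl full by auto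
  then have "\<rho> * L2_set u (Su ?K) * L2_set v (Sv ?K) - \<rho> * 1 * 1 / 100 \<le> \<sigma> ?K"
    by (rule top_singular_value_ge[OF singular_pair[OF order.refl]])
  ultimately show ?thesis using rho_pos by linarith
qed

theorem sin_angle_u_le: "sin_angle n (uh (max ku kv)) u \<le> 22 * B / \<rho>"
proof -
  let ?K = "max ku kv"
  have "0 \<le> B" using sub_op_norm_le_nonneg[OF noise_bounded[of "{}" "{}"]] by simp
  have \<sigma>: "\<rho> / 5 \<le> \<sigma> ?K" "0 < \<sigma> ?K" using singular_value_final rho_pos by auto
  have "L2_set (mat_vec W (Sv ?K) (vh ?K)) (Su ?K) \<le> B"
    using supports[of ?K] singular_vectors[of ?K] by (intro sub_op_norm_leD[OF noise_bounded]) auto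
  then have "sin_angle n (uh ?K) u \<le> L2_set u ({..<n} - Su ?K) + 2 * B / \<sigma> ?K"
    using sin_angle_le_missed_mass[OF singular_pair supports(1) unit_u \<sigma>(2)] by simp
  also have "2 * B / \<sigma> ?K \<le> 2 * B / (\<rho> / 5)"
    using \<sigma> \<open>0 \<le> B\<close> rho_pos by (intro divide_left_mono) auto
  finally show ?thesis using missed_mass_final rho_pos by (simp add: field_simps)
qed

theorem sin_angle_v_le: "sin_angle n (vh (max ku kv)) v \<le> 22 * B / \<rho>"
proof -
  interpret T: bisep_analysis n kv ku \<rho> B v u "mtransp M" Sv Su vh uh \<sigma> j0 i0
    by (rule transposed)
  show ?thesis using T.sin_angle_u_le by (simp add: max.commute)
qed

end

section \<open>The event \<open>E\<close> and the sample size\<close>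

lemma event_noise_le:
  fixes CE c' L m s a b :: real
  assumes "0 \<le> CE" "0 < c'" "0 \<le> L" "0 < m" "1 \<le> s" "a + b \<le> 2 * s"
  shows "CE * sqrt (((a + b) * L + c' * L) / m) \<le> CE * sqrt (2 + c') * sqrt (s * L / m)"
proof -
  have "(a + b) * L \<le> (2 * s) * L" using assms(6,3) by (rule mult_right_mono)
  moreover have "L \<le> s * L" using mult_right_mono[OF assms(5,3)] by simp
  then have "c' * L \<le> c' * (s * L)" using assms(2) by simp
  ultimately have "(a + b) * L + c' * L \<le> (2 + c') * (s * L)" by (simp add: algebra_simps)
  then have "((a + b) * L + c' * L) / m \<le> (2 + c') * (s * L / m)"
    using divide_right_mono[OF _ less_imp_le[OF assms(4)]] by fastforce
  then have "sqrt (((a + b) * L + c' * L) / m) \<le> sqrt (2 + c') * sqrt (s * L / m)"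
    by (metis real_sqrt_le_mono real_sqrt_mult)
  then show ?thesis using assms(1) by (simp add: mult.assoc mult_left_mono)
qed

lemma noise_le_of_sample_size:
  fixes \<Lambda> \<rho> P Q s L m :: real
  assumes "0 \<le> \<Lambda>" "0 < \<rho>" "0 < P" "0 < Q" "0 < m" "0 \<le> s * L"
    and "10000 * \<Lambda>\<^sup>2 / \<rho>\<^sup>2 * (s * inverse P * inverse Q * L) \<le> m"
  shows "\<Lambda> * sqrt (s * L / m) \<le> \<rho> * sqrt P * sqrt Q / 100"
proof -
  have "10000 * \<Lambda>\<^sup>2 / \<rho>\<^sup>2 * (s * inverse P * inverse Q * L)
      = 10000 * \<Lambda>\<^sup>2 * (s * L) / (\<rho>\<^sup>2 * (P * Q))"
    by (simp add: divide_inverse inverse_mult_distrib mult_ac)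
  then have h: "10000 * \<Lambda>\<^sup>2 * (s * L) \<le> m * (\<rho>\<^sup>2 * (P * Q))"
    using assms(2-4,7) by (simp add: pos_divide_le_eq)
  have "(\<Lambda> * sqrt (s * L / m))\<^sup>2 = 10000 * \<Lambda>\<^sup>2 * (s * L) / (10000 * m)"
    using assms(5,6) by (simp add: power_mult_distrib)
  also have "\<dots> \<le> m * (\<rho>\<^sup>2 * (P * Q)) / (10000 * m)"
    using h assms(5) by (intro divide_right_mono) auto
  also have "\<dots> = (\<rho> * sqrt P * sqrt Q / 100)\<^sup>2"
    using assms(3-5) by (simp add: power_mult_distrib power_divide)
  finally show ?thesis by (rule power2_le_imp_le) (use assms(2-4) in simp)
qed

definition sample_complexity :: "nat \<Rightarrow> (nat \<Rightarrow> real) \<Rightarrow> (nat \<Rightarrow> real) \<Rightarrow> nat \<Rightarrow> nat \<Rightarrow> real" where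
  "sample_complexity n u v ku kv = Max ((\<lambda>t. (real (min t ku) + real (min t kv))
     * struct_fun n u (min t ku) * struct_fun n v (min t kv) * ln (real n)) ` {1..max ku kv})"

lemma le_sample_complexity:
  assumes "1 \<le> t" "t \<le> max ku kv"
  shows "(real (min t ku) + real (min t kv)) * inverse (top_energy n u (min t ku))
      * inverse (top_energy n v (min t kv)) * ln (real n) \<le> sample_complexity n u v ku kv"
  unfolding sample_complexity_def struct_fun_eq_inverse_top_energy using assms by (intro Max_ge) auto

lemma sample_complexity_nonneg:
  assumes "1 \<le> n" "1 \<le> ku"
  shows "0 \<le> sample_complexity n u v ku kv"
proof -
  have "0 \<le> (real (min 1 ku) + real (min 1 kv)) * inverse (top_energy n u (min 1 ku))
      * inverse (top_energy n v (min 1 kv)) * ln (real n)"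
    using assms(1) by (simp add: top_energy_nonneg)
  also have "\<dots> \<le> sample_complexity n u v ku kv"
    using assms(2) by (intro le_sample_complexity) auto
  finally show ?thesis .
qed

lemma sub_op_norm_le_of_event_E:
  assumes "event_E CE c' n m ku kv (\<lambda>i j. M i j - \<rho> * u i * v j)"
    and "X \<subseteq> {..<n}" "Y \<subseteq> {..<n}" "card X \<le> ku" "card Y \<le> kv"
  shows "sub_op_norm_le (rank_one_residual M \<rho> u v) X Y
    (CE * sqrt (((real (card X) + real (card Y)) * ln (real n) + c' * ln (real n)) / real m))"
  using assms unfolding event_E_def
  by (intro sub_op_norm_le_if_spec_norm_sub_le) (simp add: rank_one_residual_def[abs_def])

lemma event_E_residual_small:
  assumes CE: "0 < CE" and c': "0 < c'" and n: "1 \<le> n" and m: "1 \<le> m" and rho: "0 < \<rho>"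
    and unit: "vnorm n u = 1" "vnorm n v = 1" and k: "1 \<le> ku" "1 \<le> kv"
    and event: "event_E CE c' n m ku kv (\<lambda>i j. M i j - \<rho> * u i * v j)"
    and sample_size: "10000 * (CE * sqrt (2 + c'))\<^sup>2 / \<rho>\<^sup>2 * sample_complexity n u v ku kv \<le> real m"
    and t: "t \<le> max ku kv"
    and XY: "X \<subseteq> {..<n}" "Y \<subseteq> {..<n}" "card X \<le> min (t + 1) ku" "card Y \<le> min (t + 1) kv"
  shows "sub_op_norm_le (rank_one_residual M \<rho> u v) X Y
    (\<rho> * sqrt (top_energy n u (min (max t 1) ku)) * sqrt (top_energy n v (min (max t 1) kv)) / 100)"
proof -
  define \<tau> where "\<tau> = max t 1"
  define s where "s = real (min \<tau> ku) + real (min \<tau> kv)"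
  define L where "L = ln (real n)"
  define Pu where "Pu = top_energy n u (min \<tau> ku)"
  define Pv where "Pv = top_energy n v (min \<tau> kv)"
  have L: "0 \<le> L" using n unfolding L_def by simp
  have P: "0 < Pu" "0 < Pv" unfolding Pu_def Pv_def \<tau>_def using top_energy_pos unit k by auto
  have "card X \<le> 2 * min \<tau> ku" "card Y \<le> 2 * min \<tau> kv" "1 \<le> min \<tau> ku"
    using XY k unfolding \<tau>_def min_def max_def by (auto split: if_splits)
  then have "real (card X + card Y) \<le> real (2 * min \<tau> ku + 2 * min \<tau> kv)"
    "real 1 \<le> real (min \<tau> ku + min \<tau> kv)" by (intro of_nat_mono; linarith)+
  then have "real (card X) + real (card Y) \<le> 2 * s" "1 \<le> s" unfolding s_def by simp_all
  then have "CE * sqrt (((real (card X) + real (card Y)) * L + c' * L) / real m)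
      \<le> CE * sqrt (2 + c') * sqrt (s * L / real m)"
    using CE c' L m by (intro event_noise_le) auto
  also have "\<dots> \<le> \<rho> * sqrt Pu * sqrt Pv / 100"
  proof (rule noise_le_of_sample_size)
    have "s * inverse Pu * inverse Pv * L \<le> sample_complexity n u v ku kv"
      unfolding s_def Pu_def Pv_def L_def using t k by (intro le_sample_complexity) (auto simp: \<tau>_def)
    then have "10000 * (CE * sqrt (2 + c'))\<^sup>2 / \<rho>\<^sup>2 * (s * inverse Pu * inverse Pv * L)
        \<le> 10000 * (CE * sqrt (2 + c'))\<^sup>2 / \<rho>\<^sup>2 * sample_complexity n u v ku kv"
      by (rule mult_left_mono) simp
    then show "10000 * (CE * sqrt (2 + c'))\<^sup>2 / \<rho>\<^sup>2 * (s * inverse Pu * inverse Pv * L) \<le> real m"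
      using sample_size by linarith
  qed (use CE c' rho P m L \<open>1 \<le> s\<close> in simp_all)
  finally have bound: "CE * sqrt (((real (card X) + real (card Y)) * L + c' * L) / real m)
      \<le> \<rho> * sqrt Pu * sqrt Pv / 100" .
  have "card X \<le> ku" "card Y \<le> kv" using XY(3,4) by auto
  from sub_op_norm_le_of_event_E[OF event XY(1,2) this] show ?thesis
    by (rule sub_op_norm_le_mono) (use bound in \<open>simp add: L_def Pu_def Pv_def \<tau>_def\<close>)
qed

lemma event_E_residual_bounded:
  assumes "0 < CE" "0 < c'" "1 \<le> n" "1 \<le> m" "1 \<le> ku"
    and event: "event_E CE c' n m ku kv (\<lambda>i j. M i j - \<rho> * u i * v j)"
    and XY: "X \<subseteq> {..<n}" "Y \<subseteq> {..<n}" "card X \<le> ku" "card Y \<le> kv"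
  shows "sub_op_norm_le (rank_one_residual M \<rho> u v) X Y
    (CE * sqrt (2 + c') * sqrt ((real ku + real kv) * ln (real n) / real m))"
proof -
  have "real (card X) \<le> real ku" "real (card Y) \<le> real kv" "1 \<le> real ku"
    using XY(3,4) assms(5) by simp_all
  then have "CE * sqrt (((real (card X) + real (card Y)) * ln (real n) + c' * ln (real n)) / real m)
      \<le> CE * sqrt (2 + c') * sqrt ((real ku + real kv) * ln (real n) / real m)"
    using assms(1-4) by (intro event_noise_le) auto
  then show ?thesis by (rule sub_op_norm_le_mono[OF sub_op_norm_le_of_event_E[OF event XY]])
qed

lemma bisep_sin_angle_le:
  fixes M :: "nat \<Rightarrow> nat \<Rightarrow> real" and u v :: "nat \<Rightarrow> real"
  assumes CE: "0 < CE" and c': "0 < c'" and n: "1 \<le> n" and m: "1 \<le> m" and rho: "0 < \<rho>"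
    and unit: "vnorm n u = 1" "vnorm n v = 1" and sparse: "l0norm n u \<le> ku" "l0norm n v \<le> kv"
    and event: "event_E CE c' n m ku kv (\<lambda>i j. M i j - \<rho> * u i * v j)"
    and run: "bisep_run n M ku kv Su Sv uh vh"
    and sample_size: "10000 * (CE * sqrt (2 + c'))\<^sup>2 / \<rho>\<^sup>2 * sample_complexity n u v ku kv \<le> real m"
  defines "B \<equiv> CE * sqrt (2 + c') * sqrt ((real ku + real kv) * ln (real n) / real m)"
  shows "sin_angle n (uh (max ku kv)) u \<le> 22 * B / \<rho>"
    and "sin_angle n (vh (max ku kv)) v \<le> 22 * B / \<rho>"
proof -
  have k: "1 \<le> ku" "1 \<le> kv" using l0norm_pos unit sparse by (metis One_nat_def Suc_leI order_less_le_trans)+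
  obtain i0 j0 where start: "i0 < n" "j0 < n" "\<forall>i<n. \<forall>j<n. \<bar>M i j\<bar> \<le> \<bar>M i0 j0\<bar>"
      "Su 0 = {i0}" "Sv 0 = {j0}"
    and pairs: "\<forall>t \<le> max ku kv. leading_sing_pair M (Su t) (Sv t) (uh t) (vh t)"
    and selects: "\<forall>t < max ku kv. top_k_set n (\<lambda>i. \<Sum>j<n. M i j * vh t j) (min (t + 1) ku) (Su (Suc t)) \<and>
        top_k_set n (\<lambda>j. \<Sum>i<n. M i j * uh t i) (min (t + 1) kv) (Sv (Suc t))"
    using run unfolding bisep_run_def by blast
  interpret bisep_analysis n ku kv \<rho> B u v M Su Sv uh vh "\<lambda>t. spec_norm_sub M (Su t) (Sv t)" i0 j0
  proof unfold_locales
    fix t X Y assume "t \<le> max ku kv" "X \<subseteq> {..<n}" "Y \<subseteq> {..<n}"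
      "card X \<le> min (t + 1) ku" "card Y \<le> min (t + 1) kv"
    then show "sub_op_norm_le (rank_one_residual M \<rho> u v) X Y
        (\<rho> * sqrt (top_energy n u (min (max t 1) ku)) * sqrt (top_energy n v (min (max t 1) kv)) / 100)"
      by (rule event_E_residual_small[OF CE c' n m rho unit k event sample_size])
  next
    fix X Y assume "X \<subseteq> {..<n}" "Y \<subseteq> {..<n}" "card X \<le> ku" "card Y \<le> kv"
    then show "sub_op_norm_le (rank_one_residual M \<rho> u v) X Y B"
      unfolding B_def by (rule event_E_residual_bounded[OF CE c' n m k(1) event])
  next
    fix t assume "t \<le> max ku kv"
    then show "top_singular_pair M (Su t) (Sv t) (uh t) (vh t) (spec_norm_sub M (Su t) (Sv t))"
      using pairs top_singular_pair_if_leading_sing_pair by blast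
  next
    fix t assume "t < max ku kv"
    then show "top_k_set n (\<lambda>i. \<Sum>j<n. M i j * vh t j) (min (t + 1) ku) (Su (Suc t))"
      "top_k_set n (\<lambda>j. \<Sum>i<n. M i j * uh t i) (min (t + 1) kv) (Sv (Suc t))"
      using selects by simp_all
  qed (rule rho unit sparse start)+
  show "sin_angle n (uh (max ku kv)) u \<le> 22 * B / \<rho>" "sin_angle n (vh (max ku kv)) v \<le> 22 * B / \<rho>"
    by (rule sin_angle_u_le sin_angle_v_le)+
qed

text \<open>\<open>10000 \<Lambda>\<^sup>2\<close> keeps the noise at each iteration below a hundredth of the signal and
  \<open>22 \<Lambda>\<close> absorbs the final error, where \<open>\<Lambda> = CE \<surd>(2 + c')\<close>.\<close>
definition bisep_constant :: "real \<Rightarrow> real \<Rightarrow> real" where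
  "bisep_constant CE c' = 10000 * (CE * sqrt (2 + c') + 1)\<^sup>2"

lemma bisep_constant_bounds:
  assumes "0 \<le> CE" "0 < c'"
  shows "0 < bisep_constant CE c'"
    and "10000 * (CE * sqrt (2 + c'))\<^sup>2 \<le> bisep_constant CE c'"
    and "22 * (CE * sqrt (2 + c')) \<le> bisep_constant CE c'"
proof -
  define \<Lambda> where "\<Lambda> = CE * sqrt (2 + c')"
  have "0 \<le> \<Lambda>" unfolding \<Lambda>_def using assms by simp
  then have "\<Lambda>\<^sup>2 \<le> (\<Lambda> + 1)\<^sup>2" "\<Lambda> + 1 \<le> (\<Lambda> + 1)\<^sup>2"
    using power_mono[of \<Lambda> "\<Lambda> + 1" 2] mult_left_mono[of 1 "\<Lambda> + 1" "\<Lambda> + 1"]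
    by (simp_all add: power2_eq_square)
  then show "0 < bisep_constant CE c'" "10000 * \<Lambda>\<^sup>2 \<le> bisep_constant CE c'"
    "22 * \<Lambda> \<le> bisep_constant CE c'"
    using \<open>0 \<le> \<Lambda>\<close> unfolding bisep_constant_def \<Lambda>_def[symmetric] by auto
qed

lemma theorem_constants_ge:
  fixes C \<rho> \<gamma> :: real
  assumes "0 < C" "0 < \<rho>" "0 < \<gamma>" "\<gamma> < 1"
  shows "C / \<rho>\<^sup>2 \<le> C * (1 + \<rho>)\<^sup>2 / (\<rho>\<^sup>2 * \<gamma>\<^sup>2 * (1 - sqrt \<gamma>)\<^sup>2)"
    and "C / \<rho> \<le> C * (1 + \<rho>) / (\<rho> * \<gamma>)"
proof -
  define D where "D = \<gamma>\<^sup>2 * (1 - sqrt \<gamma>)\<^sup>2"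
  have D: "0 < D" "D \<le> 1"
    using assms(3,4) unfolding D_def by (auto simp: power_le_one mult_le_one real_sqrt_less_iff)
  have "C / \<rho>\<^sup>2 \<le> C * (1 + \<rho>)\<^sup>2 / (\<rho>\<^sup>2 * D)"
  proof (rule frac_le)
    show "C \<le> C * (1 + \<rho>)\<^sup>2" using assms(1,2) by (simp add: power2_eq_square algebra_simps)
    show "0 < \<rho>\<^sup>2 * D" using assms(2) D by simp
    show "\<rho>\<^sup>2 * D \<le> \<rho>\<^sup>2" using D by (simp add: mult_left_le)
  qed (use assms(1) in simp)
  then show "C / \<rho>\<^sup>2 \<le> C * (1 + \<rho>)\<^sup>2 / (\<rho>\<^sup>2 * \<gamma>\<^sup>2 * (1 - sqrt \<gamma>)\<^sup>2)"
    unfolding D_def by (simp add: mult.assoc)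
  show "C / \<rho> \<le> C * (1 + \<rho>) / (\<rho> * \<gamma>)"
    using assms by (intro frac_le) (auto simp: mult_left_le)
qed

lemma bisep_sin_angle_le_constant:
  fixes M :: "nat \<Rightarrow> nat \<Rightarrow> real" and u v :: "nat \<Rightarrow> real"
  assumes CE: "0 < CE" and c': "0 < c'" and n: "1 \<le> n" and m: "1 \<le> m" and rho: "0 < \<rho>"
    and unit: "vnorm n u = 1" "vnorm n v = 1" and sparse: "l0norm n u \<le> ku" "l0norm n v \<le> kv"
    and event: "event_E CE c' n m ku kv (\<lambda>i j. M i j - \<rho> * u i * v j)"
    and gamma: "0 < \<gamma>" "\<gamma> < 1"
    and run: "bisep_run n M ku kv Su Sv uh vh"
  defines "C \<equiv> bisep_constant CE c'"
    and "Q \<equiv> sqrt ((real ku + real kv) * ln (real n) / real m)"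
  assumes sample_size: "C * (1 + \<rho>)\<^sup>2 / (\<rho>\<^sup>2 * \<gamma>\<^sup>2 * (1 - sqrt \<gamma>)\<^sup>2) * sample_complexity n u v ku kv \<le> real m"
  shows "sin_angle n (uh (max ku kv)) u \<le> sqrt (1 - \<gamma>) + C * (1 + \<rho>) / (\<rho> * \<gamma>) * Q
    \<and> sin_angle n (vh (max ku kv)) v \<le> sqrt (1 - \<gamma>) + C * (1 + \<rho>) / (\<rho> * \<gamma>) * Q"
proof -
  define \<Lambda> where "\<Lambda> = CE * sqrt (2 + c')"
  have C: "0 < C" "10000 * \<Lambda>\<^sup>2 \<le> C" "22 * \<Lambda> \<le> C"
    using bisep_constant_bounds[of CE c'] CE c' unfolding C_def \<Lambda>_def by auto
  have "1 \<le> ku" using l0norm_pos[OF unit(1)] sparse(1) by linarith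
  then have "0 \<le> sample_complexity n u v ku kv" by (rule sample_complexity_nonneg[OF n])
  moreover have "10000 * \<Lambda>\<^sup>2 / \<rho>\<^sup>2 \<le> C * (1 + \<rho>)\<^sup>2 / (\<rho>\<^sup>2 * \<gamma>\<^sup>2 * (1 - sqrt \<gamma>)\<^sup>2)"
    using divide_right_mono[OF C(2), of "\<rho>\<^sup>2"] theorem_constants_ge(1)[OF C(1) rho gamma] by simp
  ultimately have "10000 * \<Lambda>\<^sup>2 / \<rho>\<^sup>2 * sample_complexity n u v ku kv \<le> real m"
    using sample_size mult_right_mono by (meson order_trans)
  then have sin: "sin_angle n (uh (max ku kv)) u \<le> 22 * \<Lambda> * Q / \<rho>"
    "sin_angle n (vh (max ku kv)) v \<le> 22 * \<Lambda> * Q / \<rho>"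
    using bisep_sin_angle_le[OF CE c' n m rho unit sparse event run] unfolding \<Lambda>_def Q_def
    by (simp_all add: mult.assoc)
  have "0 \<le> Q" unfolding Q_def using n by simp
  moreover have "22 * \<Lambda> / \<rho> \<le> C * (1 + \<rho>) / (\<rho> * \<gamma>)"
    using divide_right_mono[OF C(3), of \<rho>] theorem_constants_ge(2)[OF C(1) rho gamma] rho by simp
  ultimately have "22 * \<Lambda> / \<rho> * Q \<le> C * (1 + \<rho>) / (\<rho> * \<gamma>) * Q"
    by (intro mult_right_mono)
  then have "22 * \<Lambda> * Q / \<rho> \<le> C * (1 + \<rho>) / (\<rho> * \<gamma>) * Q" by simp
  moreover have "0 \<le> sqrt (1 - \<gamma>)" using gamma by simp
  ultimately show ?thesis using sin by (intro conjI) linarith+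
qed

theorem theorem1:
  shows "\<forall>CE>0. \<forall>c'>0. \<exists>C>0. \<forall>(n::nat) (m::nat) (xs::nat \<Rightarrow> nat \<Rightarrow> real)
      (ys::nat \<Rightarrow> nat \<Rightarrow> real) (\<rho>::real) (u::nat \<Rightarrow> real) (v::nat \<Rightarrow> real)
      (ku::nat) (kv::nat) (\<gamma>::real) (Su::nat \<Rightarrow> nat set) (Sv::nat \<Rightarrow> nat set)
      (uh::nat \<Rightarrow> nat \<Rightarrow> real) (vh::nat \<Rightarrow> nat \<Rightarrow> real).
     n \<ge> 1 \<longrightarrow> m \<ge> 1 \<longrightarrow>
     0 < \<rho> \<longrightarrow> \<rho> < 1 \<longrightarrow>
     vnorm n u = 1 \<longrightarrow> vnorm n v = 1 \<longrightarrow>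
     l0norm n u \<le> ku \<longrightarrow> l0norm n v \<le> kv \<longrightarrow>
     event_E CE c' n m ku kv (\<lambda>i j. sample_cov n m xs ys i j - \<rho> * u i * v j) \<longrightarrow>
     0 < \<gamma> \<longrightarrow> \<gamma> < 1 \<longrightarrow>
     bisep_run n (sample_cov n m xs ys) ku kv Su Sv uh vh \<longrightarrow>
     (let kmax = max ku kv;
          C1 = C * (1 + \<rho>)\<^sup>2 / (\<rho>\<^sup>2 * \<gamma>\<^sup>2 * (1 - sqrt \<gamma>)\<^sup>2);
          C2 = C * (1 + \<rho>) / (\<rho> * \<gamma>);
          bound = sqrt (1 - \<gamma>) + C2 * sqrt ((real ku + real kv) * ln (real n) / real m)
      in real m \<ge> C1 * Max ((\<lambda>t. (real (min t ku) + real (min t kv))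
                                  * struct_fun n u (min t ku) * struct_fun n v (min t kv)
                                  * ln (real n)) ` {1..kmax})
         \<longrightarrow> sin_angle n (uh kmax) u \<le> bound \<and> sin_angle n (vh kmax) v \<le> bound)"
  apply (intro allI impI)
  subgoal for CE c'
    apply (rule exI[of _ "bisep_constant CE c'"])
    apply (intro conjI allI impI bisep_constant_bounds(1))
      apply (simp_all only: Let_def less_imp_le)
    apply (rule impI)
    apply (rule bisep_sin_angle_le_constant[unfolded sample_complexity_def])
    by assumption+
  done

end
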